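(* Let $X$ be a topological space and let $\mathcal{A}(X)\subset C(X)$ have the finite-dimensional composition property of order $n$. Assume $\sigma:\mathbb{R}\to\mathbb{R}$ is continuous and nonaffine, and that there exist $t_0\in\mathbb{R}$ and an open neighborhood $U$ of $t_0$ such that $\sigma$ is differentiable on $U$ and $\sigma'$ is continuous at $t_0$ with $\sigma'(t_0)\neq0$. Let $m\ge1$, $K\subset X$ compact, and let $f_1,\dots,f_n\in\mathcal{A}(X)$ be such that, with $F=(f_1,\dots,f_n)$, the set $\{u\circ F|_K: u\in C(\mathbb{R}^n;\mathbb{R}^m)\}$ is dense in $C(K;\mathbb{R}^m)$ (such $f_i$ exist by the property). Then for every $g\in C(K;\mathbb{R}^m)$ and every $\varepsilon>0$ there is $H\in\mathcal{N}^{(n+m+2,m)}(X,\sigma;F)$ with $\sup_{x\in K}\|g(x)-H(x)\|_{\mathbb{R}^m}<\varepsilon$; i.e. $\mathcal{N}^{(n+m+2,m)}(X,\sigma;F)|_K$ is dense in $C(K;\mathbb{R}^m)$.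
   Context: A family $\mathcal{A}(X)\subset C(X)$ has the finite-dimensional composition property of order $n$ if for every compact $K\subset X$ and every integer $m\ge1$ there exist $f_1,\dots,f_n\in\mathcal{A}(X)$ such that, with $F=(f_1,\dots,f_n):X\to\mathbb{R}^n$, the set $\{u\circ F|_K: u\in C(\mathbb{R}^n;\mathbb{R}^m)\}$ is dense in $C(K;\mathbb{R}^m)$ (uniform norm on $K$). A classical deep feedforward network $\Phi:\mathbb{R}^n\to\mathbb{R}^m$ with activation $\sigma$ is a map $\Phi=T_{l+1}\circ\sigma\circ T_l\circ\cdots\circ\sigma\circ T_0$ with affine maps $T_0:\mathbb{R}^n\to\mathbb{R}^{k_0}$, $T_j:\mathbb{R}^{k_{j-1}}\to\mathbb{R}^{k_j}$, $T_{l+1}:\mathbb{R}^{k_l}\to\mathbb{R}^m$, $\sigma$ acting componentwise; its width is $\max_j k_j$ (the maximal number of neurons in a hidden layer), with arbitrary depth $l$. For $F=(f_1,\dots,f_n)$ with $f_i\in\mathcal{A}(X)$, $k\in\mathbb{N}$ and $m\ge1$, $\mathcal{N}^{(k,m)}(X,\sigma;F)$ denotes the set of all $H:X\to\mathbb{R}^m$ of the form $H=\Phi\circ F$ where $\Phi:\mathbb{R}^n\to\mathbb{R}^m$ is a classical deep feedforward network with activation $\sigma$ and width at most $k$. *)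

theory Defs
  imports "HOL-Analysis.Analysis"
begin

text \<open>The space R^k is represented by the carrier Rn k of functions
  nat => real vanishing at all indices >= k, with the (product) topology inherited
  from nat => real; this subspace is homeomorphic to Euclidean R^k.\<close>

definition Rn :: "nat \<Rightarrow> (nat \<Rightarrow> real) set" where
  "Rn k = {x. \<forall>i\<ge>k. x i = 0}"

definition vnorm :: "nat \<Rightarrow> (nat \<Rightarrow> real) \<Rightarrow> real" where
  "vnorm k x = sqrt (\<Sum>i<k. (x i)\<^sup>2)"

text \<open>The map F = (f_1, ..., f_n) : X -> R^n (indices shifted to 0..n-1).\<close>
definition tuple :: "nat \<Rightarrow> (nat \<Rightarrow> 'a \<Rightarrow> real) \<Rightarrow> 'a \<Rightarrow> (nat \<Rightarrow> real)" where
  "tuple n f = (\<lambda>x i. if i < n then f i x else 0)"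

definition dense_comp :: "nat \<Rightarrow> nat \<Rightarrow> 'a::topological_space set \<Rightarrow> ('a \<Rightarrow> (nat \<Rightarrow> real)) \<Rightarrow> bool" where
  "dense_comp n m K F \<longleftrightarrow>
     (\<forall>g. continuous_on K g \<and> g ` K \<subseteq> Rn m \<longrightarrow>
       (\<forall>\<epsilon>>0. \<exists>u. continuous_on (Rn n) u \<and> u ` Rn n \<subseteq> Rn m \<and>
                    (\<forall>x\<in>K. vnorm m (g x - u (F x)) < \<epsilon>)))"

definition fd_comp_property :: "('a::topological_space \<Rightarrow> real) set \<Rightarrow> nat \<Rightarrow> bool" where
  "fd_comp_property A n \<longleftrightarrow>
     (\<forall>K m. compact K \<and> m \<ge> 1 \<longrightarrow>
        (\<exists>f. (\<forall>i<n. f i \<in> A) \<and> dense_comp n m K (tuple n f)))"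

definition affine_map :: "nat \<Rightarrow> nat \<Rightarrow> (nat \<Rightarrow> nat \<Rightarrow> real) \<Rightarrow> (nat \<Rightarrow> real)
    \<Rightarrow> (nat \<Rightarrow> real) \<Rightarrow> (nat \<Rightarrow> real)" where
  "affine_map a b W c x = (\<lambda>j. if j < b then (\<Sum>i<a. W j i * x i) + c j else 0)"

definition act :: "(real \<Rightarrow> real) \<Rightarrow> nat \<Rightarrow> (nat \<Rightarrow> real) \<Rightarrow> (nat \<Rightarrow> real)" where
  "act \<sigma> k y = (\<lambda>j. if j < k then \<sigma> (y j) else 0)"

text \<open>Hidden layers: d 0 is the input dimension, d (j+1) the width of hidden layer j+1;
  layers ... j x is the output of the j-th hidden layer (layer 0 = input).\<close>
fun layers :: "(real \<Rightarrow> real) \<Rightarrow> (nat \<Rightarrow> nat) \<Rightarrow> (nat \<Rightarrow> nat \<Rightarrow> nat \<Rightarrow> real)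
    \<Rightarrow> (nat \<Rightarrow> nat \<Rightarrow> real) \<Rightarrow> nat \<Rightarrow> (nat \<Rightarrow> real) \<Rightarrow> (nat \<Rightarrow> real)" where
  "layers \<sigma> d W b 0 x = x"
| "layers \<sigma> d W b (Suc j) x =
     act \<sigma> (d (Suc j)) (affine_map (d j) (d (Suc j)) (W j) (b j) (layers \<sigma> d W b j x))"

definition is_deep_net :: "(real \<Rightarrow> real) \<Rightarrow> nat \<Rightarrow> nat \<Rightarrow> nat
    \<Rightarrow> ((nat \<Rightarrow> real) \<Rightarrow> (nat \<Rightarrow> real)) \<Rightarrow> bool" where
  "is_deep_net \<sigma> n k m \<Phi> \<longleftrightarrow>
     (\<exists>L d W b. L \<ge> 1 \<and> d 0 = n \<and> (\<forall>j\<in>{1..L}. 1 \<le> d j \<and> d j \<le> k) \<and>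
        \<Phi> = (\<lambda>x. affine_map (d L) m (W L) (b L) (layers \<sigma> d W b L x)))"

definition NN :: "(real \<Rightarrow> real) \<Rightarrow> nat \<Rightarrow> nat \<Rightarrow> nat \<Rightarrow> ('a \<Rightarrow> (nat \<Rightarrow> real))
    \<Rightarrow> ('a \<Rightarrow> (nat \<Rightarrow> real)) set" where
  "NN \<sigma> k m n F = {H. \<exists>\<Phi>. is_deep_net \<sigma> n k m \<Phi> \<and> H = \<Phi> \<circ> F}"

end

theory Submission
  imports Defs "HOL-Analysis.Analysis"
begin

text \<open>
  Following Kidger and Lyons, a network of width \<open>s + 1\<close> acting on \<open>s\<close> registers can
  approximate any operation that overwrites one register by an affine combination of the
  registers plus one \<open>\<sigma>\<close>-neuron: that neuron computes the new term, while the other \<open>s\<close>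
  neurons carry the registers through \<open>\<sigma>\<close> near a point where \<open>\<sigma>' \<noteq> 0\<close>, where \<open>\<sigma>\<close> is
  almost affine.  Such operations compose, since they are uniformly continuous on bounded sets.
  Because \<open>\<sigma>\<close> is not affine, \<open>u\<^sup>2\<close> and hence products are locally uniform limits of
  one-layer \<open>\<sigma>\<close>-networks; so a register can be multiplied by a linear form of the input, by
  \<open>exp\<close> of it via \<open>(1 + t/N)\<^sup>N\<close>, and finally any exponential polynomial of the \<open>n\<close> inputs can
  be added to each of \<open>m\<close> output registers, using one scratch register: width \<open>n + m + 2\<close>.
  Exponential polynomials are dense by Stone--Weierstrass, and the density of the
  compositions \<open>u \<circ> F\<close> reduces the theorem to approximating a continuous \<open>u\<close> on the compact
  set \<open>F(K)\<close>.
\<close>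

section \<open>One-layer approximation on the real line\<close>

definition ridge_sum :: "(real \<Rightarrow> real) \<Rightarrow> (real \<times> real \<times> real) list \<Rightarrow> real \<Rightarrow> real" where
  "ridge_sum \<sigma> L u = sum_list (map (\<lambda>(c, a, b). c * \<sigma> (a * u + b)) L)"

definition shallow_approx :: "(real \<Rightarrow> real) \<Rightarrow> (real \<Rightarrow> real) \<Rightarrow> bool" where
  "shallow_approx \<sigma> h \<longleftrightarrow>
     (\<forall>R \<epsilon>. 0 < \<epsilon> \<longrightarrow> (\<exists>L. \<forall>u. \<bar>u\<bar> \<le> R \<longrightarrow> \<bar>h u - ridge_sum \<sigma> L u\<bar> < \<epsilon>))"

lemma ridge_sum_append: "ridge_sum \<sigma> (L1 @ L2) u = ridge_sum \<sigma> L1 u + ridge_sum \<sigma> L2 u"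
  by (simp add: ridge_sum_def)

lemma ridge_sum_scale: "ridge_sum \<sigma> (map (\<lambda>(c, a, b). (k * c, a, b)) L) u = k * ridge_sum \<sigma> L u"
  by (induct L) (auto simp: ridge_sum_def algebra_simps)

lemma ridge_sum_affine:
  "ridge_sum \<sigma> (map (\<lambda>(c, a, b). (c, a * p, a * q + b)) L) u = ridge_sum \<sigma> L (p * u + q)"
  by (induct L) (auto simp: ridge_sum_def algebra_simps)

lemma shallow_approx_activation: "shallow_approx \<sigma> \<sigma>"
  unfolding shallow_approx_def by (auto intro!: exI[of _ "[(1, 1, 0)]"] simp: ridge_sum_def)

lemma shallow_approx_zero: "shallow_approx \<sigma> (\<lambda>u. 0)"
  unfolding shallow_approx_def by (auto intro!: exI[of _ "[]"] simp: ridge_sum_def)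

lemma shallow_approx_limit:
  assumes "\<And>R \<epsilon>. 0 < \<epsilon> \<Longrightarrow> \<exists>h'. shallow_approx \<sigma> h' \<and> (\<forall>u. \<bar>u\<bar> \<le> R \<longrightarrow> \<bar>h u - h' u\<bar> < \<epsilon>)"
  shows "shallow_approx \<sigma> h"
  unfolding shallow_approx_def
proof (intro allI impI)
  fix R \<epsilon> :: real assume "0 < \<epsilon>"
  then obtain h' where "shallow_approx \<sigma> h'" and h': "\<forall>u. \<bar>u\<bar> \<le> R \<longrightarrow> \<bar>h u - h' u\<bar> < \<epsilon>/2"
    using assms[of "\<epsilon>/2"] by auto
  obtain L where L: "\<forall>u. \<bar>u\<bar> \<le> R \<longrightarrow> \<bar>h' u - ridge_sum \<sigma> L u\<bar> < \<epsilon>/2"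
    using \<open>shallow_approx \<sigma> h'\<close> \<open>0 < \<epsilon>\<close> unfolding shallow_approx_def by (meson half_gt_zero)
  have "\<bar>h u - ridge_sum \<sigma> L u\<bar> < \<epsilon>" if "\<bar>u\<bar> \<le> R" for u
    using h'[rule_format, OF that] L[rule_format, OF that] by linarith
  then show "\<exists>L. \<forall>u. \<bar>u\<bar> \<le> R \<longrightarrow> \<bar>h u - ridge_sum \<sigma> L u\<bar> < \<epsilon>" by blast
qed

lemma shallow_approx_cmult:
  assumes "shallow_approx \<sigma> h" shows "shallow_approx \<sigma> (\<lambda>u. k * h u)"
  unfolding shallow_approx_def
proof (intro allI impI)
  fix R \<epsilon> :: real assume "0 < \<epsilon>"
  then have "0 < \<epsilon> / (\<bar>k\<bar> + 1)" by simp
  then obtain L where L: "\<And>u. \<bar>u\<bar> \<le> R \<Longrightarrow> \<bar>h u - ridge_sum \<sigma> L u\<bar> < \<epsilon> / (\<bar>k\<bar> + 1)"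
    using assms unfolding shallow_approx_def by blast
  have "\<bar>k * h u - ridge_sum \<sigma> (map (\<lambda>(c, a, b). (k * c, a, b)) L) u\<bar> < \<epsilon>" if "\<bar>u\<bar> \<le> R" for u
  proof -
    have "\<bar>k * h u - ridge_sum \<sigma> (map (\<lambda>(c, a, b). (k * c, a, b)) L) u\<bar>
        = \<bar>k\<bar> * \<bar>h u - ridge_sum \<sigma> L u\<bar>"
      unfolding ridge_sum_scale by (metis abs_mult right_diff_distrib)
    also have "\<dots> \<le> \<bar>k\<bar> * (\<epsilon> / (\<bar>k\<bar> + 1))"
      using L[OF that] by (intro mult_left_mono) auto
    also have "\<dots> < \<epsilon>" using \<open>0 < \<epsilon>\<close> by (simp add: field_simps)
    finally show ?thesis .
  qed
  then show "\<exists>L. \<forall>u. \<bar>u\<bar> \<le> R \<longrightarrow> \<bar>k * h u - ridge_sum \<sigma> L u\<bar> < \<epsilon>" by blast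
qed

lemma shallow_approx_add:
  assumes "shallow_approx \<sigma> h1" "shallow_approx \<sigma> h2"
  shows "shallow_approx \<sigma> (\<lambda>u. h1 u + h2 u)"
  unfolding shallow_approx_def
proof (intro allI impI)
  fix R \<epsilon> :: real assume "0 < \<epsilon>"
  then obtain L1 L2 where L:
      "\<And>u. \<bar>u\<bar> \<le> R \<Longrightarrow> \<bar>h1 u - ridge_sum \<sigma> L1 u\<bar> < \<epsilon>/2"
      "\<And>u. \<bar>u\<bar> \<le> R \<Longrightarrow> \<bar>h2 u - ridge_sum \<sigma> L2 u\<bar> < \<epsilon>/2"
    using assms unfolding shallow_approx_def by (meson half_gt_zero)
  have "\<bar>h1 u + h2 u - ridge_sum \<sigma> (L1 @ L2) u\<bar> < \<epsilon>" if "\<bar>u\<bar> \<le> R" for u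
    using L[OF that] unfolding ridge_sum_append by linarith
  then show "\<exists>L. \<forall>u. \<bar>u\<bar> \<le> R \<longrightarrow> \<bar>h1 u + h2 u - ridge_sum \<sigma> L u\<bar> < \<epsilon>" by blast
qed

lemma shallow_approx_affine:
  assumes "shallow_approx \<sigma> h" shows "shallow_approx \<sigma> (\<lambda>u. h (p * u + q))"
  unfolding shallow_approx_def
proof (intro allI impI)
  fix R \<epsilon> :: real assume "0 < \<epsilon>"
  then obtain L where L: "\<And>v. \<bar>v\<bar> \<le> \<bar>p\<bar> * \<bar>R\<bar> + \<bar>q\<bar> \<Longrightarrow> \<bar>h v - ridge_sum \<sigma> L v\<bar> < \<epsilon>"
    using assms unfolding shallow_approx_def by blast
  have "\<bar>p * u + q\<bar> \<le> \<bar>p\<bar> * \<bar>R\<bar> + \<bar>q\<bar>" if "\<bar>u\<bar> \<le> R" for u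
    using that abs_triangle_ineq[of "p * u" q] mult_left_mono[of "\<bar>u\<bar>" "\<bar>R\<bar>" "\<bar>p\<bar>"]
    by (simp add: abs_mult)
  then have "\<forall>u. \<bar>u\<bar> \<le> R \<longrightarrow>
      \<bar>h (p * u + q) - ridge_sum \<sigma> (map (\<lambda>(c, a, b). (c, a * p, a * q + b)) L) u\<bar> < \<epsilon>"
    by (simp add: ridge_sum_affine L)
  then show "\<exists>L. \<forall>u. \<bar>u\<bar> \<le> R \<longrightarrow> \<bar>h (p * u + q) - ridge_sum \<sigma> L u\<bar> < \<epsilon>" by blast
qed

lemma shallow_approx_shift_sum:
  fixes N :: nat
  assumes "shallow_approx \<sigma> h"
  shows "shallow_approx \<sigma> (\<lambda>u. \<Sum>i<N. c i * h (u + b i))"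
proof (induct N)
  case 0 then show ?case by (simp add: shallow_approx_zero)
next
  case (Suc N)
  have "shallow_approx \<sigma> (\<lambda>u. (\<Sum>i<N. c i * h (u + b i)) + c N * h (1 * u + b N))"
    by (intro shallow_approx_add Suc shallow_approx_cmult shallow_approx_affine assms)
  then show ?case by simp
qed

definition window_integral :: "real \<Rightarrow> (real \<Rightarrow> real) \<Rightarrow> real \<Rightarrow> real" where
  "window_integral \<delta> h u = integral {u..u+\<delta>} h"

lemma left_riemann_sum_error:
  fixes h :: "real \<Rightarrow> real" and N :: nat and c l w :: real
  assumes h: "continuous_on UNIV h" and l: "0 \<le> l"
    and w: "\<And>i v. i < N \<Longrightarrow> v \<in> {c+i*l..c+i*l+l} \<Longrightarrow> \<bar>h v - h (c+i*l)\<bar> \<le> w"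
  shows "\<bar>integral {c..c+N*l} h - (\<Sum>i<N. l * h (c+i*l))\<bar> \<le> N*l*w"
  using w
proof (induct N)
  case 0 then show ?case by simp
next
  case (Suc N)
  define a where "a = c + N*l"
  have cont: "continuous_on S h" for S using h by (rule continuous_on_subset) simp
  have "integral {a..a+l} (\<lambda>v. h v - h a) = integral {a..a+l} h - l * h a"
    using l by (subst integral_diff) (auto intro: integrable_continuous_real cont simp: content_real)
  moreover have "norm (integral {a..a+l} (\<lambda>v. h v - h a)) \<le> w * (a + l - a)"
    using Suc.prems[of N] l by (intro integral_bound continuous_intros cont) (auto simp: a_def)
  moreover have "integral {c..a} h + integral {a..a+l} h = integral {c..a+l} h"
    using l by (intro Henstock_Kurzweil_Integration.integral_combine integrable_continuous_real cont)
      (auto simp: a_def)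
  moreover have "\<bar>integral {c..a} h - (\<Sum>i<N. l * h (c+i*l))\<bar> \<le> N*l*w"
    using Suc by (auto simp: a_def)
  moreover have "c + real (Suc N) * l = a + l" by (simp add: a_def algebra_simps)
  ultimately show ?case by (simp add: a_def algebra_simps)
qed

lemma shallow_approx_window_integral:
  fixes h :: "real \<Rightarrow> real"
  assumes h: "continuous_on UNIV h" "shallow_approx \<sigma> h" and \<delta>: "0 < \<delta>"
  shows "shallow_approx \<sigma> (window_integral \<delta> h)"
proof (rule shallow_approx_limit)
  fix R \<epsilon> :: real assume \<epsilon>: "0 < \<epsilon>"
  define I where "I = {-\<bar>R\<bar>-\<delta>-1..\<bar>R\<bar>+\<delta>+1}"
  have "uniformly_continuous_on I h"
    unfolding I_def by (rule compact_uniformly_continuous) (auto intro: continuous_on_subset[OF h(1)])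
  moreover have "0 < \<epsilon> / (2*\<delta>)" using \<epsilon> \<delta> by simp
  ultimately obtain \<eta> where \<eta>: "\<eta> > 0"
    and uc: "\<And>x y. x \<in> I \<Longrightarrow> y \<in> I \<Longrightarrow> dist y x < \<eta> \<Longrightarrow> dist (h y) (h x) < \<epsilon> / (2*\<delta>)"
    unfolding uniformly_continuous_on_def by metis
  obtain N :: nat where N: "\<delta> / \<eta> < N" using reals_Archimedean2 by blast
  then have N0: "0 < N" using \<delta> \<eta> by (metis divide_pos_pos of_nat_0 gr_zeroI less_asym)
  define l where "l = \<delta> / N"
  have l0: "0 < l" and lN: "N * l = \<delta>" and l\<eta>: "l < \<eta>"
    unfolding l_def using \<delta> N0 N \<eta> by (simp_all add: field_simps)
  have "\<bar>window_integral \<delta> h u - (\<Sum>i<N. l * h (u + i*l))\<bar> < \<epsilon>" if u: "\<bar>u\<bar> \<le> R" for u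
  proof -
    have "\<bar>integral {u..u+N*l} h - (\<Sum>i<N. l * h (u+i*l))\<bar> \<le> N*l*(\<epsilon> / (2*\<delta>))"
    proof (rule left_riemann_sum_error[OF h(1) less_imp_le[OF l0]])
      fix i v assume i: "i < N" and v: "v \<in> {u+i*l..u+i*l+l}"
      have "real i * l + l \<le> \<delta>"
        using i l0 lN mult_right_mono[of "real (Suc i)" N l] by (simp add: algebra_simps)
      moreover have "0 \<le> real i * l" "- \<bar>R\<bar> \<le> u" "u \<le> \<bar>R\<bar>" using l0 u by auto
      ultimately have "u+i*l \<in> I" "v \<in> I"
        using v \<delta> l0 unfolding I_def atLeastAtMost_iff by linarith+
      moreover have "dist v (u+i*l) < \<eta>" using v l\<eta> by (auto simp: dist_real_def)
      ultimately show "\<bar>h v - h (u+i*l)\<bar> \<le> \<epsilon> / (2*\<delta>)"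
        using uc by (fastforce simp: dist_real_def)
    qed
    also have "N*l*(\<epsilon> / (2*\<delta>)) < \<epsilon>" using lN \<delta> \<epsilon> by simp
    finally show ?thesis unfolding window_integral_def lN .
  qed
  moreover have "shallow_approx \<sigma> (\<lambda>u. \<Sum>i<N. l * h (u + i*l))"
    by (rule shallow_approx_shift_sum[OF h(2)])
  ultimately show "\<exists>h'. shallow_approx \<sigma> h' \<and>
      (\<forall>u. \<bar>u\<bar> \<le> R \<longrightarrow> \<bar>window_integral \<delta> h u - h' u\<bar> < \<epsilon>)"
    by blast
qed

lemma has_real_derivative_window_integral:
  fixes h :: "real \<Rightarrow> real"
  assumes h: "continuous_on UNIV h" and \<delta>: "0 < \<delta>"
  shows "(window_integral \<delta> h has_real_derivative (h (x+\<delta>) - h x)) (at x)"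
proof -
  define a where "a = x - 1"
  define F where "F = (\<lambda>u. integral {a..u} h)"
  have DF: "(F has_real_derivative h u) (at u)" if "a < u" for u
  proof -
    have "(F has_real_derivative h u) (at u within {a..u+1})"
      unfolding F_def using that by (intro integral_has_real_derivative continuous_on_subset[OF h]) auto
    then show ?thesis using at_within_Icc_at[of a u "u+1"] that by simp
  qed
  have "((\<lambda>u. F (u+\<delta>) - F u) has_real_derivative (h (x+\<delta>) - h x)) (at x)"
    using DF[of "x+\<delta>"] DF[of x] \<delta> unfolding a_def by (intro DERIV_diff) (auto simp: DERIV_shift)
  then show ?thesis
  proof (rule has_field_derivative_transform_within_open[where S = "{a<..}"])
    fix u assume "u \<in> {a<..}"
    then have "integral {a..u} h + integral {u..u+\<delta>} h = integral {a..u+\<delta>} h"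
      using \<delta> by (intro Henstock_Kurzweil_Integration.integral_combine integrable_continuous_real
          continuous_on_subset[OF h]) auto
    then show "F (u+\<delta>) - F u = window_integral \<delta> h u"
      unfolding F_def window_integral_def by simp
  qed (auto simp: a_def)
qed

lemma continuous_on_window_integral:
  fixes h :: "real \<Rightarrow> real"
  assumes "continuous_on UNIV h" "0 < \<delta>"
  shows "continuous_on UNIV (window_integral \<delta> h)"
  using has_real_derivative_window_integral[OF assms] DERIV_isCont continuous_at_imp_continuous_on
  by blast

lemma affine_if_second_differences_vanish:
  fixes g :: "real \<Rightarrow> real"
  assumes g: "continuous_on UNIV g"
    and H: "\<And>s \<delta>. 0 < \<delta> \<Longrightarrow> g (s+2*\<delta>) - 2*g (s+\<delta>) + g s = 0"
  shows "\<exists>a c. \<forall>t. g t = a*t + c"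
proof -
  define \<phi> where "\<phi> t = g t - g 0 - t*(g 1 - g 0)" for t
  have H\<phi>: "\<phi> (s+2*\<delta>) - 2*\<phi> (s+\<delta>) + \<phi> s = 0" if "0 < \<delta>" for s \<delta>
    using H[OF that, of s] unfolding \<phi>_def by (simp add: algebra_simps)
  have \<phi>0: "\<phi> 0 = 0" and \<phi>1: "\<phi> 1 = 0" unfolding \<phi>_def by simp_all
  have arith: "\<phi> (real k * d) = real k * \<phi> d \<and> \<phi> (real (Suc k) * d) = real (Suc k) * \<phi> d"
    if d: "0 < d" for d and k :: nat
  proof (induct k)
    case 0 then show ?case using \<phi>0 by simp
  next
    case (Suc k)
    have "\<phi> (real k * d + 2*d) - 2*\<phi> (real k * d + d) + \<phi> (real k * d) = 0" by (rule H\<phi>[OF d])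
    moreover have "real k * d + 2*d = real (Suc (Suc k)) * d" "real k * d + d = real (Suc k) * d"
      by (simp_all add: algebra_simps)
    ultimately show ?case using Suc by (simp add: algebra_simps)
  qed
  have pos: "\<phi> (real p / real q) = 0" if q: "q \<noteq> 0" for p q :: nat
  proof -
    have d: "0 < 1 / real q" using q by simp
    have "\<phi> (1 / real q) = 0" using arith[OF d, of q] q \<phi>1 by simp
    then show ?thesis using arith[OF d, of p] by simp
  qed
  have neg: "\<phi> (- r) = - \<phi> r" if "0 < r" for r
    using H\<phi>[OF that, of "-r"] \<phi>0 by simp
  have "\<phi> x = 0" if x: "x \<in> \<rat>" for x
  proof -
    obtain p q :: nat where "q \<noteq> 0" and "\<bar>x\<bar> = real p / real q"
      using Rats_abs_nat_div_natE[OF x] by metis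
    then have "\<phi> \<bar>x\<bar> = 0" using pos by simp
    then show ?thesis using neg[of "\<bar>x\<bar>"] by (cases "x < 0") auto
  qed
  moreover have "closed {t. \<phi> t = 0}"
    unfolding \<phi>_def by (intro closed_Collect_eq continuous_intros g)
  ultimately have "closure \<rat> \<subseteq> {t. \<phi> t = 0}" by (intro closure_minimal) auto
  then have "\<forall>t. g t = (g 1 - g 0) * t + g 0" unfolding \<phi>_def Rats_closure_real by (auto simp: algebra_simps)
  then show ?thesis by blast
qed

lemma has_real_derivative_reflected_combination:
  assumes "\<And>x. (g has_real_derivative g' x) (at x)"
  shows "((\<lambda>x. g (s+x) + c * g (s-x)) has_real_derivative (g' (s+t) - c * g' (s-t))) (at t)"
proof -
  have "((\<lambda>x. g (s+x)) has_real_derivative g' (s+t) * 1) (at t)"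
    by (rule DERIV_chain2[OF assms]) (auto intro!: derivative_eq_intros)
  moreover have "((\<lambda>x. g (s-x)) has_real_derivative g' (s-t) * (-1)) (at t)"
    by (rule DERIV_chain2[OF assms]) (auto intro!: derivative_eq_intros)
  ultimately show ?thesis using DERIV_add DERIV_cmult by fastforce
qed

lemma second_difference_mean_value:
  fixes Q Q1 Q2 :: "real \<Rightarrow> real"
  assumes dQ: "\<And>x. (Q has_real_derivative Q1 x) (at x)"
    and dQ1: "\<And>x. (Q1 has_real_derivative Q2 x) (at x)"
  shows "\<exists>t. \<bar>t\<bar> \<le> \<bar>x\<bar> \<and> Q (s+x) + Q (s-x) - 2 * Q s = (Q2 (s+t) + Q2 (s-t)) / 2 * x^2"
proof -
  define diff :: "nat \<Rightarrow> real \<Rightarrow> real" where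
    "diff k = [\<lambda>x. Q (s+x) + Q (s-x) - 2 * Q s, \<lambda>x. Q1 (s+x) - Q1 (s-x), \<lambda>x. Q2 (s+x) + Q2 (s-x)] ! k"
    for k
  have "(diff k has_real_derivative diff (Suc k) t) (at t)" if "k < 2" for k t
  proof -
    have "((\<lambda>x. Q (s+x) + 1 * Q (s-x) - 2 * Q s) has_real_derivative (Q1 (s+t) - 1 * Q1 (s-t)) - 0) (at t)"
      by (intro DERIV_diff has_real_derivative_reflected_combination dQ DERIV_const)
    moreover have "((\<lambda>x. Q1 (s+x) + (-1) * Q1 (s-x)) has_real_derivative (Q2 (s+t) - (-1) * Q2 (s-t))) (at t)"
      by (rule has_real_derivative_reflected_combination[OF dQ1])
    ultimately show ?thesis
      using that by (auto simp: diff_def less_2_cases_iff)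
  qed
  then obtain t where "\<bar>t\<bar> \<le> \<bar>x\<bar>"
    and "diff 0 x = (\<Sum>k<2. diff k 0 / fact k * x ^ k) + diff 2 t / fact 2 * x ^ 2"
    using Maclaurin_bi_le[of diff "diff 0" 2 x] by auto
  then show ?thesis by (auto simp: diff_def numeral_2_eq_2)
qed

lemma shallow_approx_square_if_curved:
  fixes Q :: "real \<Rightarrow> real"
  assumes Q: "shallow_approx \<sigma> Q"
    and dQ: "\<And>x. (Q has_real_derivative Q1 x) (at x)"
    and dQ1: "\<And>x. (Q1 has_real_derivative Q2 x) (at x)"
    and cont: "isCont Q2 s" and curved: "Q2 s \<noteq> 0"
  shows "shallow_approx \<sigma> (\<lambda>u. u^2)"
proof (rule shallow_approx_limit)
  fix R \<epsilon> :: real assume \<epsilon>: "0 < \<epsilon>"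
  define D where "D = Q2 s"
  define R' where "R' = \<bar>R\<bar> + 1"
  define \<eta> where "\<eta> = \<epsilon> * \<bar>D\<bar> / (2 * R'^2)"
  have R': "0 < R'" unfolding R'_def by simp
  have "0 < \<eta>" unfolding \<eta>_def D_def using \<epsilon> curved R' by simp
  then obtain \<rho> where \<rho>: "\<rho> > 0" and near: "\<And>y. \<bar>y - s\<bar> < \<rho> \<Longrightarrow> \<bar>Q2 y - D\<bar> < \<eta>"
    using cont unfolding isCont_def LIM_eq D_def by (metis abs_zero diff_self real_norm_def)
  define h where "h = \<rho> / (2*R')"
  have h: "0 < h" unfolding h_def using \<rho> R' by simp
  \<comment> \<open>the second difference of \<open>Q\<close> at scale \<open>h\<close>, normalised to be close to \<open>u\<^sup>2\<close>;
    its arguments are written as affine maps of \<open>u\<close> to fit \<open>shallow_approx_affine\<close>\<close>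
  define p where "p u = (Q (h*u + s) + Q ((-h)*u + s) + (-2) * Q (0*u + s)) / (h^2 * D)" for u
  have "shallow_approx \<sigma> p"
    unfolding p_def[abs_def] divide_inverse mult.commute[where b = "inverse _"]
    by (intro shallow_approx_cmult shallow_approx_add shallow_approx_affine Q)
  moreover have "\<bar>u^2 - p u\<bar> < \<epsilon>" if u: "\<bar>u\<bar> \<le> R" for u
  proof -
    obtain t where t: "\<bar>t\<bar> \<le> \<bar>h*u\<bar>"
      and eq: "Q (s+h*u) + Q (s-h*u) - 2 * Q s = (Q2 (s+t) + Q2 (s-t)) / 2 * (h*u)^2"
      using second_difference_mean_value[OF dQ dQ1] by blast
    have uR: "\<bar>u\<bar> \<le> R'" using u unfolding R'_def by simp
    have "\<bar>t\<bar> \<le> h * R'" using order_trans[OF t[unfolded abs_mult] mult_left_mono[OF uR]] h by simp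
    also have "h * R' < \<rho>" unfolding h_def using R' \<rho> by (simp add: field_simps)
    finally have "\<bar>Q2 (s+t) - D\<bar> \<le> \<eta>" "\<bar>Q2 (s-t) - D\<bar> \<le> \<eta>"
      using near[of "s+t"] near[of "s-t"] by simp_all
    then have err: "\<bar>(D - Q2 (s+t)) + (D - Q2 (s-t))\<bar> \<le> 2*\<eta>" by linarith
    have "p u = (Q2 (s+t) + Q2 (s-t)) / (2*D) * u^2"
      unfolding p_def using eq h curved by (simp add: D_def field_simps power_mult_distrib)
    then have "u^2 - p u = u^2 * ((D - Q2 (s+t)) + (D - Q2 (s-t))) / (2*D)"
      using curved by (simp add: D_def field_simps)
    then have "\<bar>u^2 - p u\<bar> = u^2 * \<bar>(D - Q2 (s+t)) + (D - Q2 (s-t))\<bar> / (2*\<bar>D\<bar>)"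
      by (simp add: abs_mult abs_divide)
    also have "\<dots> \<le> R'^2 * (2*\<eta>) / (2*\<bar>D\<bar>)"
      using uR err by (intro divide_right_mono mult_mono) (auto simp: abs_le_square_iff[symmetric])
    also have "\<dots> < \<epsilon>" unfolding \<eta>_def D_def using curved R' \<epsilon> by (simp add: field_simps)
    finally show ?thesis .
  qed
  ultimately show "\<exists>h'. shallow_approx \<sigma> h' \<and> (\<forall>u. \<bar>u\<bar> \<le> R \<longrightarrow> \<bar>u^2 - h' u\<bar> < \<epsilon>)"
    by blast
qed

text \<open>Since \<open>\<sigma>\<close> is not affine, some second difference
  \<open>\<sigma>(x+2\<delta>) - 2\<sigma>(x+\<delta>) + \<sigma>(x)\<close> is nonzero; averaging \<open>\<sigma>\<close> twice over windows of width
  \<open>\<delta>\<close> yields a function with exactly this second derivative.\<close>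
lemma shallow_approx_square:
  fixes \<sigma> :: "real \<Rightarrow> real"
  assumes \<sigma>: "continuous_on UNIV \<sigma>" and nonaffine: "\<not> (\<exists>a c. \<forall>t. \<sigma> t = a*t + c)"
  shows "shallow_approx \<sigma> (\<lambda>u. u^2)"
proof -
  obtain s \<delta> where \<delta>: "0 < \<delta>" and curved: "\<sigma> (s+2*\<delta>) - 2*\<sigma> (s+\<delta>) + \<sigma> s \<noteq> 0"
    using affine_if_second_differences_vanish[OF \<sigma>] nonaffine by blast
  define G where "G = window_integral \<delta> \<sigma>"
  define Q2 where "Q2 x = \<sigma> (x+2*\<delta>) - 2*\<sigma> (x+\<delta>) + \<sigma> x" for x
  have G: "continuous_on UNIV G" "shallow_approx \<sigma> G"
    unfolding G_def using \<sigma> \<delta> shallow_approx_activation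
    by (auto intro: continuous_on_window_integral shallow_approx_window_integral)
  have dG: "(G has_real_derivative (\<sigma> (x+\<delta>) - \<sigma> x)) (at x)" for x
    unfolding G_def by (rule has_real_derivative_window_integral[OF \<sigma> \<delta>])
  show ?thesis
  proof (rule shallow_approx_square_if_curved)
    show "shallow_approx \<sigma> (window_integral \<delta> G)"
      using shallow_approx_window_integral[OF G \<delta>] .
    show "(window_integral \<delta> G has_real_derivative (G (x+\<delta>) - G x)) (at x)" for x
      using has_real_derivative_window_integral[OF G(1) \<delta>] .
    show "((\<lambda>x. G (x+\<delta>) - G x) has_real_derivative Q2 x) (at x)" for x
      using DERIV_diff[OF dG[of "x+\<delta>", unfolded DERIV_shift] dG[of x]]
      by (simp add: Q2_def algebra_simps)
    have \<sigma>_at: "isCont \<sigma> x" for x using \<sigma> by (simp add: continuous_on_eq_continuous_at)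
    have "isCont (\<lambda>x. \<sigma> (x + c)) s" for c by (rule isCont_o2[OF _ \<sigma>_at]) simp
    then show "isCont Q2 s"
      unfolding Q2_def using \<sigma>_at by (intro isCont_add isCont_diff isCont_mult continuous_const)
    show "Q2 s \<noteq> 0" using curved by (simp add: Q2_def)
  qed
qed

section \<open>Building deep networks\<close>

lemma affine_map_comp:
  "affine_map b c W2 c2 (affine_map a b W1 c1 x) =
   affine_map a c (\<lambda>j i. \<Sum>l<b. W2 j l * W1 l i) (\<lambda>j. (\<Sum>l<b. W2 j l * c1 l) + c2 j) x"
proof
  fix j
  have "(\<Sum>l<b. W2 j l * ((\<Sum>i<a. W1 l i * x i) + c1 l))
      = (\<Sum>i<a. (\<Sum>l<b. W2 j l * W1 l i) * x i) + (\<Sum>l<b. W2 j l * c1 l)"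
    by (simp add: sum_distrib_left sum_distrib_right distrib_left sum.distrib mult.assoc
        sum.swap[where A = "{..<b}"])
  then show "affine_map b c W2 c2 (affine_map a b W1 c1 x) j =
      affine_map a c (\<lambda>j i. \<Sum>l<b. W2 j l * W1 l i) (\<lambda>j. (\<Sum>l<b. W2 j l * c1 l) + c2 j) x j"
    by (simp add: affine_map_def)
qed

lemma layers_cong:
  assumes "\<And>i. i < j \<Longrightarrow> W i = W' i \<and> B i = B' i" "\<And>i. i \<le> j \<Longrightarrow> d i = d' i"
  shows "layers \<sigma> d W B j x = layers \<sigma> d' W' B' j x"
  using assms by (induct j) auto

lemma deep_net_output_zero:
  assumes "is_deep_net \<sigma> a k b \<Phi>" "b \<le> i"
  shows "\<Phi> x i = 0"
  using assms unfolding is_deep_net_def affine_map_def by auto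

lemma deep_net_one_layer:
  assumes "1 \<le> h" "h \<le> k"
  shows "is_deep_net \<sigma> a k b (\<lambda>x. affine_map h b W2 c2 (act \<sigma> h (affine_map a h W1 c1 x)))"
  unfolding is_deep_net_def
  by (rule exI[of _ 1], rule exI[of _ "\<lambda>j. if j = 0 then a else h"],
      rule exI[of _ "\<lambda>j. if j = 0 then W1 else W2"], rule exI[of _ "\<lambda>j. if j = 0 then c1 else c2"])
     (use assms in auto)

lemma deep_net_affine_post:
  assumes "is_deep_net \<sigma> a k b \<Phi>"
  shows "is_deep_net \<sigma> a k c (\<lambda>x. affine_map b c W2 c2 (\<Phi> x))"
proof -
  obtain L d W1 b1 where L: "L \<ge> 1" "d 0 = a" "\<forall>j\<in>{1..L}. 1 \<le> d j \<and> d j \<le> k"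
    and \<Phi>: "\<Phi> = (\<lambda>x. affine_map (d L) b (W1 L) (b1 L) (layers \<sigma> d W1 b1 L x))"
    using assms unfolding is_deep_net_def by blast
  define W where "W j = (if j = L then (\<lambda>j i. \<Sum>l<b. W2 j l * W1 L l i) else W1 j)" for j
  define B where "B j = (if j = L then (\<lambda>j. (\<Sum>l<b. W2 j l * b1 L l) + c2 j) else b1 j)" for j
  have "layers \<sigma> d W B L x = layers \<sigma> d W1 b1 L x" for x
    by (rule layers_cong) (auto simp: W_def B_def)
  then show ?thesis unfolding is_deep_net_def
    by (intro exI[of _ L] exI[of _ d] exI[of _ W] exI[of _ B])
       (use L in \<open>auto simp: \<Phi> affine_map_comp W_def B_def\<close>)
qed

lemma deep_net_affine_pre:
  assumes "is_deep_net \<sigma> b k c \<Phi>"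
  shows "is_deep_net \<sigma> a k c (\<lambda>x. \<Phi> (affine_map a b W0 c0 x))"
proof -
  obtain L d W1 b1 where L: "L \<ge> 1" "d 0 = b" "\<forall>j\<in>{1..L}. 1 \<le> d j \<and> d j \<le> k"
    and \<Phi>: "\<Phi> = (\<lambda>x. affine_map (d L) c (W1 L) (b1 L) (layers \<sigma> d W1 b1 L x))"
    using assms unfolding is_deep_net_def by blast
  define d' where "d' j = (if j = 0 then a else d j)" for j
  define W where "W j = (if j = 0 then (\<lambda>j i. \<Sum>l<b. W1 0 j l * W0 l i) else W1 j)" for j
  define B where "B j = (if j = 0 then (\<lambda>j. (\<Sum>l<b. W1 0 j l * c0 l) + b1 0 j) else b1 j)" for j
  have layers: "layers \<sigma> d' W B (Suc j) x = layers \<sigma> d W1 b1 (Suc j) (affine_map a b W0 c0 x)" for j x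
  proof (induct j)
    case 0 then show ?case by (simp add: d'_def W_def B_def affine_map_comp L(2))
  next
    case (Suc j)
    have "d' (Suc i) = d (Suc i)" "W (Suc i) = W1 (Suc i)" "B (Suc i) = b1 (Suc i)" for i
      by (simp_all add: d'_def W_def B_def)
    then show ?case using Suc by (simp only: layers.simps)
  qed
  obtain j where j: "L = Suc j" using L(1) by (cases L) auto
  show ?thesis unfolding is_deep_net_def
  proof (intro exI[of _ L] exI[of _ d'] exI[of _ W] exI[of _ B] conjI)
    show "(\<lambda>x. \<Phi> (affine_map a b W0 c0 x)) =
      (\<lambda>x. affine_map (d' L) c (W L) (B L) (layers \<sigma> d' W B L x))"
      unfolding \<Phi> j layers by (simp add: d'_def W_def B_def)
  qed (use L in \<open>auto simp: d'_def\<close>)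
qed

lemma deep_net_comp:
  assumes N2: "is_deep_net \<sigma> b k c \<Phi>2" and N1: "is_deep_net \<sigma> a k b \<Phi>1"
  shows "is_deep_net \<sigma> a k c (\<lambda>x. \<Phi>2 (\<Phi>1 x))"
proof -
  obtain L1 d1 W1 b1 where L1: "L1 \<ge> 1" "d1 0 = a" "\<forall>j\<in>{1..L1}. 1 \<le> d1 j \<and> d1 j \<le> k"
    and \<Phi>1: "\<Phi>1 = (\<lambda>x. affine_map (d1 L1) b (W1 L1) (b1 L1) (layers \<sigma> d1 W1 b1 L1 x))"
    using N1 unfolding is_deep_net_def by blast
  obtain L2 d2 W2 b2 where L2: "L2 \<ge> 1" "d2 0 = b" "\<forall>j\<in>{1..L2}. 1 \<le> d2 j \<and> d2 j \<le> k"
    and \<Phi>2: "\<Phi>2 = (\<lambda>x. affine_map (d2 L2) c (W2 L2) (b2 L2) (layers \<sigma> d2 W2 b2 L2 x))"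
    using N2 unfolding is_deep_net_def by blast
  \<comment> \<open>the output map of \<open>\<Phi>1\<close> and the input map of \<open>\<Phi>2\<close> merge into one affine map\<close>
  define d where "d j = (if j \<le> L1 then d1 j else d2 (j - L1))" for j
  define Wm where "Wm = (\<lambda>j i. \<Sum>l<b. W2 0 j l * W1 L1 l i)"
  define bm where "bm = (\<lambda>j. (\<Sum>l<b. W2 0 j l * b1 L1 l) + b2 0 j)"
  define W where "W j = (if j < L1 then W1 j else if j = L1 then Wm else W2 (j - L1))" for j
  define B where "B j = (if j < L1 then b1 j else if j = L1 then bm else b2 (j - L1))" for j
  have layers: "layers \<sigma> d W B (L1 + Suc j) x = layers \<sigma> d2 W2 b2 (Suc j) (\<Phi>1 x)" for j x
  proof (induct j)
    case 0
    have prefix: "layers \<sigma> d W B L1 x = layers \<sigma> d1 W1 b1 L1 x"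
      by (rule layers_cong) (auto simp: d_def W_def B_def)
    have "W L1 = Wm" "B L1 = bm" "d L1 = d1 L1" "d (Suc L1) = d2 (Suc 0)"
      by (simp_all add: W_def B_def d_def)
    then show ?case unfolding \<Phi>1
      by (simp only: add_Suc_right add_0_right layers.simps prefix)
        (simp add: Wm_def bm_def affine_map_comp L2(2))
  next
    case (Suc j)
    have "layers \<sigma> d W B (L1 + Suc (Suc j)) x = act \<sigma> (d (Suc (L1 + Suc j)))
        (affine_map (d (L1 + Suc j)) (d (Suc (L1 + Suc j))) (W (L1 + Suc j)) (B (L1 + Suc j))
          (layers \<sigma> d W B (L1 + Suc j) x))"
      by simp
    also have "\<dots> = layers \<sigma> d2 W2 b2 (Suc (Suc j)) (\<Phi>1 x)"
      unfolding Suc by (simp add: d_def W_def B_def)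
    finally show ?case .
  qed
  obtain j where j: "L2 = Suc j" using L2(1) by (cases L2) auto
  show ?thesis unfolding is_deep_net_def
  proof (intro exI conjI)
    show "\<forall>i\<in>{1..L1 + L2}. 1 \<le> d i \<and> d i \<le> k"
    proof
      fix i assume i: "i \<in> {1..L1 + L2}"
      show "1 \<le> d i \<and> d i \<le> k"
      proof (cases "i \<le> L1")
        case False
        then have "i - L1 \<in> {1..L2}" using i by auto
        then show ?thesis using False L2(3) by (simp add: d_def)
      qed (use i L1(3) in \<open>simp add: d_def\<close>)
    qed
    show "(\<lambda>x. \<Phi>2 (\<Phi>1 x)) =
      (\<lambda>x. affine_map (d (L1 + L2)) c (W (L1 + L2)) (B (L1 + L2)) (layers \<sigma> d W B (L1 + L2) x))"
      unfolding j layers unfolding \<Phi>2 j by (simp add: d_def W_def B_def)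
  qed (use L1 in \<open>auto simp: d_def\<close>)
qed

section \<open>Operations on registers approximated by deep networks\<close>

definition cube :: "nat \<Rightarrow> real \<Rightarrow> (nat \<Rightarrow> real) set" where
  "cube s R = {x. (\<forall>i\<ge>s. x i = 0) \<and> (\<forall>i<s. \<bar>x i\<bar> \<le> R)}"

definition deep_approx :: "(real \<Rightarrow> real) \<Rightarrow> nat \<Rightarrow> ((nat \<Rightarrow> real) \<Rightarrow> (nat \<Rightarrow> real)) \<Rightarrow> bool" where
  "deep_approx \<sigma> s G \<longleftrightarrow> (\<forall>R \<epsilon>. 0 < \<epsilon> \<longrightarrow> (\<exists>\<Phi>. is_deep_net \<sigma> s (Suc s) s \<Phi> \<and>
      (\<forall>x\<in>cube s R. \<forall>i<s. \<bar>\<Phi> x i - G x i\<bar> < \<epsilon>)))"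

definition cube_ucont :: "nat \<Rightarrow> ((nat \<Rightarrow> real) \<Rightarrow> real) \<Rightarrow> bool" where
  "cube_ucont s F \<longleftrightarrow> (\<forall>R. \<exists>M. \<forall>x\<in>cube s R. \<bar>F x\<bar> \<le> M) \<and>
     (\<forall>R \<epsilon>. 0 < \<epsilon> \<longrightarrow> (\<exists>\<delta>>0. \<forall>x\<in>cube s R. \<forall>y\<in>cube s R.
        (\<forall>i<s. \<bar>x i - y i\<bar> < \<delta>) \<longrightarrow> \<bar>F x - F y\<bar> < \<epsilon>))"

definition cube_ucont_map :: "nat \<Rightarrow> ((nat \<Rightarrow> real) \<Rightarrow> (nat \<Rightarrow> real)) \<Rightarrow> bool" where
  "cube_ucont_map s G \<longleftrightarrow> (\<forall>R. \<exists>R'. G ` cube s R \<subseteq> cube s R') \<and>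
     (\<forall>R \<epsilon>. 0 < \<epsilon> \<longrightarrow> (\<exists>\<delta>>0. \<forall>x\<in>cube s R. \<forall>y\<in>cube s R.
        (\<forall>i<s. \<bar>x i - y i\<bar> < \<delta>) \<longrightarrow> (\<forall>i<s. \<bar>G x i - G y i\<bar> < \<epsilon>)))"

text \<open>Uniform continuity is what lets approximation errors pass through later operations.\<close>
definition regular_approx :: "(real \<Rightarrow> real) \<Rightarrow> nat \<Rightarrow> ((nat \<Rightarrow> real) \<Rightarrow> (nat \<Rightarrow> real)) \<Rightarrow> bool" where
  "regular_approx \<sigma> s G \<longleftrightarrow> deep_approx \<sigma> s G \<and> cube_ucont_map s G"

lemma cube_mono: "x \<in> cube s R \<Longrightarrow> R \<le> R' \<Longrightarrow> x \<in> cube s R'"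
  unfolding cube_def by force

lemma deep_approx_limit:
  assumes "\<And>R \<epsilon>. 0 < \<epsilon> \<Longrightarrow> \<exists>G'. deep_approx \<sigma> s G' \<and> (\<forall>x\<in>cube s R. \<forall>i<s. \<bar>G x i - G' x i\<bar> < \<epsilon>)"
  shows "deep_approx \<sigma> s G"
  unfolding deep_approx_def
proof (intro allI impI)
  fix R \<epsilon> :: real assume "0 < \<epsilon>"
  then have "0 < \<epsilon>/2" by simp
  then obtain G' where G': "deep_approx \<sigma> s G'" and close: "\<forall>x\<in>cube s R. \<forall>i<s. \<bar>G x i - G' x i\<bar> < \<epsilon>/2"
    using assms by blast
  obtain \<Phi> where "is_deep_net \<sigma> s (Suc s) s \<Phi>" and \<Phi>: "\<forall>x\<in>cube s R. \<forall>i<s. \<bar>\<Phi> x i - G' x i\<bar> < \<epsilon>/2"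
    using G' \<open>0 < \<epsilon>/2\<close> unfolding deep_approx_def by blast
  moreover have "\<bar>\<Phi> x i - G x i\<bar> < \<epsilon>" if "x \<in> cube s R" "i < s" for x i
    using close[rule_format, OF that] \<Phi>[rule_format, OF that] by linarith
  ultimately show "\<exists>\<Phi>. is_deep_net \<sigma> s (Suc s) s \<Phi> \<and> (\<forall>x\<in>cube s R. \<forall>i<s. \<bar>\<Phi> x i - G x i\<bar> < \<epsilon>)"
    by blast
qed

text \<open>The first network is approximated to within \<open>min \<delta> 1\<close>, so that its outputs stay in a
  slightly larger cube on which the second map is uniformly continuous with modulus \<open>\<delta>\<close>.\<close>
lemma deep_approx_comp:
  assumes A1: "deep_approx \<sigma> s G1" and A2: "deep_approx \<sigma> s G2"
    and U1: "cube_ucont_map s G1" and U2: "cube_ucont_map s G2"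
  shows "deep_approx \<sigma> s (\<lambda>x. G2 (G1 x))"
  unfolding deep_approx_def
proof (intro allI impI)
  fix R \<epsilon> :: real assume "0 < \<epsilon>"
  obtain R' where R': "G1 ` cube s R \<subseteq> cube s R'" using U1 unfolding cube_ucont_map_def by blast
  have "0 < \<epsilon>/2" using \<open>0 < \<epsilon>\<close> by simp
  then obtain \<delta> where "\<delta> > 0" and uc: "\<forall>x\<in>cube s (R'+1). \<forall>y\<in>cube s (R'+1).
      (\<forall>i<s. \<bar>x i - y i\<bar> < \<delta>) \<longrightarrow> (\<forall>i<s. \<bar>G2 x i - G2 y i\<bar> < \<epsilon>/2)"
    using U2 unfolding cube_ucont_map_def by blast
  have "0 < min \<delta> 1" using \<open>\<delta> > 0\<close> by simp
  then obtain \<Phi>1 where N1: "is_deep_net \<sigma> s (Suc s) s \<Phi>1"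
    and \<Phi>1: "\<forall>x\<in>cube s R. \<forall>i<s. \<bar>\<Phi>1 x i - G1 x i\<bar> < min \<delta> 1"
    using A1 unfolding deep_approx_def by blast
  obtain \<Phi>2 where N2: "is_deep_net \<sigma> s (Suc s) s \<Phi>2"
    and \<Phi>2: "\<forall>x\<in>cube s (R'+1). \<forall>i<s. \<bar>\<Phi>2 x i - G2 x i\<bar> < \<epsilon>/2"
    using A2 \<open>0 < \<epsilon>/2\<close> unfolding deep_approx_def by blast
  have "\<bar>\<Phi>2 (\<Phi>1 x) i - G2 (G1 x) i\<bar> < \<epsilon>" if x: "x \<in> cube s R" and i: "i < s" for x i
  proof -
    have G1x: "G1 x \<in> cube s R'" using R' x by blast
    then have G1x': "G1 x \<in> cube s (R'+1)" by (rule cube_mono) simp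
    have close: "\<bar>\<Phi>1 x j - G1 x j\<bar> < min \<delta> 1" if "j < s" for j
      using \<Phi>1 x that by blast
    have "\<bar>\<Phi>1 x j\<bar> \<le> R' + 1" if "j < s" for j
      using close[OF that] G1x that unfolding cube_def by force
    then have \<Phi>1x: "\<Phi>1 x \<in> cube s (R'+1)"
      using deep_net_output_zero[OF N1] unfolding cube_def by blast
    have "\<bar>\<Phi>2 (\<Phi>1 x) i - G2 (\<Phi>1 x) i\<bar> < \<epsilon>/2" using \<Phi>2 \<Phi>1x i by blast
    moreover have "\<bar>G2 (\<Phi>1 x) i - G2 (G1 x) i\<bar> < \<epsilon>/2"
      using uc \<Phi>1x G1x' close i by force
    ultimately show ?thesis by linarith
  qed
  with deep_net_comp[OF N2 N1]
  show "\<exists>\<Phi>. is_deep_net \<sigma> s (Suc s) s \<Phi> \<and> (\<forall>x\<in>cube s R. \<forall>i<s. \<bar>\<Phi> x i - G2 (G1 x) i\<bar> < \<epsilon>)"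
    by blast
qed

lemma cube_ucont_const: "cube_ucont s (\<lambda>x. c)"
  unfolding cube_ucont_def by (auto intro: exI[of _ 1])

lemma cube_ucont_coord: "cube_ucont s (\<lambda>x. x j)"
proof -
  have "\<bar>x j\<bar> \<le> \<bar>R\<bar>" if "x \<in> cube s R" for x R
    using that unfolding cube_def by (cases "j < s") force+
  moreover have "\<bar>x j - y j\<bar> < \<epsilon>"
    if "x \<in> cube s R" "y \<in> cube s R" "\<forall>i<s. \<bar>x i - y i\<bar> < \<epsilon>" "0 < \<epsilon>" for x y R \<epsilon>
    using that unfolding cube_def by (cases "j < s") auto
  ultimately show ?thesis unfolding cube_ucont_def by blast
qed

lemma cube_ucont_add:
  assumes F: "cube_ucont s F" and G: "cube_ucont s G"
  shows "cube_ucont s (\<lambda>x. F x + G x)"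
  unfolding cube_ucont_def
proof (intro conjI allI impI)
  fix R
  obtain M1 where "\<forall>x\<in>cube s R. \<bar>F x\<bar> \<le> M1" using F unfolding cube_ucont_def by blast
  moreover obtain M2 where "\<forall>x\<in>cube s R. \<bar>G x\<bar> \<le> M2" using G unfolding cube_ucont_def by blast
  ultimately have "\<forall>x\<in>cube s R. \<bar>F x + G x\<bar> \<le> M1 + M2" by (metis abs_triangle_ineq add_mono order_trans)
  then show "\<exists>M. \<forall>x\<in>cube s R. \<bar>F x + G x\<bar> \<le> M" ..
next
  fix R \<epsilon> :: real assume "0 < \<epsilon>"
  then have "0 < \<epsilon>/2" by simp
  then obtain d1 where "d1 > 0"
    and uF: "\<forall>x\<in>cube s R. \<forall>y\<in>cube s R. (\<forall>i<s. \<bar>x i - y i\<bar> < d1) \<longrightarrow> \<bar>F x - F y\<bar> < \<epsilon>/2"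
    using F unfolding cube_ucont_def by blast
  obtain d2 where "d2 > 0"
    and uG: "\<forall>x\<in>cube s R. \<forall>y\<in>cube s R. (\<forall>i<s. \<bar>x i - y i\<bar> < d2) \<longrightarrow> \<bar>G x - G y\<bar> < \<epsilon>/2"
    using G \<open>0 < \<epsilon>/2\<close> unfolding cube_ucont_def by blast
  have "\<bar>F x + G x - (F y + G y)\<bar> < \<epsilon>"
    if "x \<in> cube s R" "y \<in> cube s R" "\<forall>i<s. \<bar>x i - y i\<bar> < min d1 d2" for x y
  proof -
    have "\<bar>F x - F y\<bar> < \<epsilon>/2" "\<bar>G x - G y\<bar> < \<epsilon>/2" using uF uG that by auto
    then show ?thesis by linarith
  qed
  moreover have "0 < min d1 d2" using \<open>d1 > 0\<close> \<open>d2 > 0\<close> by simp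
  ultimately show "\<exists>\<delta>>0. \<forall>x\<in>cube s R. \<forall>y\<in>cube s R.
      (\<forall>i<s. \<bar>x i - y i\<bar> < \<delta>) \<longrightarrow> \<bar>F x + G x - (F y + G y)\<bar> < \<epsilon>"
    by blast
qed

lemma cube_ucont_compose:
  assumes g: "continuous_on UNIV g" and F: "cube_ucont s F"
  shows "cube_ucont s (\<lambda>x. g (F x))"
  unfolding cube_ucont_def
proof (intro conjI allI impI)
  fix R
  obtain M where M: "\<forall>x\<in>cube s R. F x \<in> {-M..M}"
    using F unfolding cube_ucont_def by (meson abs_le_iff atLeastAtMost_iff minus_le_iff)
  have "compact (g ` {-M..M})" by (rule compact_continuous_image) (auto intro: continuous_on_subset[OF g])
  then obtain B where "\<forall>y\<in>g ` {-M..M}. norm y \<le> B" using compact_imp_bounded bounded_iff by metis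
  then have "\<forall>x\<in>cube s R. \<bar>g (F x)\<bar> \<le> B" using M by auto
  then show "\<exists>B. \<forall>x\<in>cube s R. \<bar>g (F x)\<bar> \<le> B" ..
next
  fix R \<epsilon> :: real assume "0 < \<epsilon>"
  obtain M where M: "\<forall>x\<in>cube s R. F x \<in> {-M..M}"
    using F unfolding cube_ucont_def by (meson abs_le_iff atLeastAtMost_iff minus_le_iff)
  have "uniformly_continuous_on {-M..M} g"
    by (rule compact_uniformly_continuous) (auto intro: continuous_on_subset[OF g])
  then obtain \<eta> where "\<eta> > 0"
    and ug: "\<And>a b. a \<in> {-M..M} \<Longrightarrow> b \<in> {-M..M} \<Longrightarrow> dist a b < \<eta> \<Longrightarrow> dist (g a) (g b) < \<epsilon>"
    unfolding uniformly_continuous_on_def using \<open>0 < \<epsilon>\<close> by metis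
  then obtain \<delta> where "\<delta> > 0"
    and uF: "\<forall>x\<in>cube s R. \<forall>y\<in>cube s R. (\<forall>i<s. \<bar>x i - y i\<bar> < \<delta>) \<longrightarrow> \<bar>F x - F y\<bar> < \<eta>"
    using F unfolding cube_ucont_def by blast
  moreover have "\<bar>g (F x) - g (F y)\<bar> < \<epsilon>"
    if "x \<in> cube s R" "y \<in> cube s R" "\<forall>i<s. \<bar>x i - y i\<bar> < \<delta>" for x y
    using ug[of "F x" "F y"] uF M that by (simp add: dist_real_def)
  ultimately show "\<exists>\<delta>>0. \<forall>x\<in>cube s R. \<forall>y\<in>cube s R.
      (\<forall>i<s. \<bar>x i - y i\<bar> < \<delta>) \<longrightarrow> \<bar>g (F x) - g (F y)\<bar> < \<epsilon>"
    by blast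
qed

lemma cube_ucont_mult:
  assumes "cube_ucont s F" "cube_ucont s G"
  shows "cube_ucont s (\<lambda>x. F x * G x)"
proof -
  have polarization: "F x * G x = ((F x + G x)^2 + - ((F x + - G x)^2)) / 4" for x
    by (simp add: power2_eq_square algebra_simps)
  have sq: "cube_ucont s (\<lambda>x. (H x)^2)" and neg: "cube_ucont s (\<lambda>x. - H x)"
    and quarter: "cube_ucont s (\<lambda>x. H x / 4)" if "cube_ucont s H" for H
    by (rule cube_ucont_compose[OF _ that], auto intro!: continuous_intros)+
  show ?thesis unfolding polarization
    using quarter[OF cube_ucont_add[OF sq[OF cube_ucont_add[OF assms]]
          neg[OF sq[OF cube_ucont_add[OF assms(1) neg[OF assms(2)]]]]]] .
qed

lemma cube_ucont_sum:
  fixes N :: nat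
  assumes "\<And>i. cube_ucont s (F i)"
  shows "cube_ucont s (\<lambda>x. \<Sum>i<N. F i x)"
  by (induct N) (simp_all add: cube_ucont_const cube_ucont_add assms)

lemma cube_ucont_linear: "cube_ucont s (\<lambda>x. \<Sum>i<n. a i * x i)"
  by (intro cube_ucont_sum cube_ucont_mult cube_ucont_const cube_ucont_coord)

lemma cube_ucont_map_id: "cube_ucont_map s (\<lambda>x. x)"
  unfolding cube_ucont_map_def by blast

lemma cube_ucont_map_comp:
  assumes U1: "cube_ucont_map s G1" and U2: "cube_ucont_map s G2"
  shows "cube_ucont_map s (\<lambda>x. G2 (G1 x))"
  unfolding cube_ucont_map_def
proof (intro conjI allI impI)
  fix R
  obtain R1 where "G1 ` cube s R \<subseteq> cube s R1" using U1 unfolding cube_ucont_map_def by blast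
  moreover obtain R2 where "G2 ` cube s R1 \<subseteq> cube s R2" using U2 unfolding cube_ucont_map_def by blast
  ultimately show "\<exists>R'. (\<lambda>x. G2 (G1 x)) ` cube s R \<subseteq> cube s R'" by blast
next
  fix R \<epsilon> :: real assume "0 < \<epsilon>"
  obtain R1 where R1: "G1 ` cube s R \<subseteq> cube s R1" using U1 unfolding cube_ucont_map_def by blast
  obtain \<delta>2 where "\<delta>2 > 0" and uc2: "\<forall>x\<in>cube s R1. \<forall>y\<in>cube s R1.
      (\<forall>i<s. \<bar>x i - y i\<bar> < \<delta>2) \<longrightarrow> (\<forall>i<s. \<bar>G2 x i - G2 y i\<bar> < \<epsilon>)"
    using U2 \<open>0 < \<epsilon>\<close> unfolding cube_ucont_map_def by blast
  then obtain \<delta>1 where "\<delta>1 > 0" and uc1: "\<forall>x\<in>cube s R. \<forall>y\<in>cube s R.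
      (\<forall>i<s. \<bar>x i - y i\<bar> < \<delta>1) \<longrightarrow> (\<forall>i<s. \<bar>G1 x i - G1 y i\<bar> < \<delta>2)"
    using U1 unfolding cube_ucont_map_def by blast
  have "\<forall>x\<in>cube s R. \<forall>y\<in>cube s R.
      (\<forall>i<s. \<bar>x i - y i\<bar> < \<delta>1) \<longrightarrow> (\<forall>i<s. \<bar>G2 (G1 x) i - G2 (G1 y) i\<bar> < \<epsilon>)"
    using uc1 uc2 R1 by blast
  with \<open>\<delta>1 > 0\<close> show "\<exists>\<delta>>0. \<forall>x\<in>cube s R. \<forall>y\<in>cube s R. (\<forall>i<s. \<bar>x i - y i\<bar> < \<delta>) \<longrightarrow>
      (\<forall>i<s. \<bar>G2 (G1 x) i - G2 (G1 y) i\<bar> < \<epsilon>)"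
    by blast
qed

lemma cube_ucont_map_update:
  assumes U: "cube_ucont_map s G" and F: "cube_ucont s F" and p: "p < s"
  shows "cube_ucont_map s (\<lambda>x. (G x)(p := F x))"
  unfolding cube_ucont_map_def
proof (intro conjI allI impI)
  fix R
  obtain R' where R': "G ` cube s R \<subseteq> cube s R'" using U unfolding cube_ucont_map_def by blast
  obtain M where M: "\<forall>x\<in>cube s R. \<bar>F x\<bar> \<le> M" using F unfolding cube_ucont_def by blast
  have "(G x)(p := F x) \<in> cube s (max R' M)" if "x \<in> cube s R" for x
  proof -
    have "\<forall>i\<ge>s. G x i = 0" "\<forall>i<s. \<bar>G x i\<bar> \<le> R'" "\<bar>F x\<bar> \<le> M"
      using R' M that unfolding cube_def by auto
    then show ?thesis using p unfolding cube_def by (simp add: le_max_iff_disj)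
  qed
  then have "(\<lambda>x. (G x)(p := F x)) ` cube s R \<subseteq> cube s (max R' M)" by blast
  then show "\<exists>R'. (\<lambda>x. (G x)(p := F x)) ` cube s R \<subseteq> cube s R'" ..
next
  fix R \<epsilon> :: real assume "0 < \<epsilon>"
  then obtain d1 where "d1 > 0"
    and uG: "\<forall>x\<in>cube s R. \<forall>y\<in>cube s R. (\<forall>i<s. \<bar>x i - y i\<bar> < d1) \<longrightarrow> (\<forall>i<s. \<bar>G x i - G y i\<bar> < \<epsilon>)"
    using U unfolding cube_ucont_map_def by blast
  obtain d2 where "d2 > 0"
    and uF: "\<forall>x\<in>cube s R. \<forall>y\<in>cube s R. (\<forall>i<s. \<bar>x i - y i\<bar> < d2) \<longrightarrow> \<bar>F x - F y\<bar> < \<epsilon>"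
    using F \<open>0 < \<epsilon>\<close> unfolding cube_ucont_def by blast
  have "\<forall>x\<in>cube s R. \<forall>y\<in>cube s R. (\<forall>i<s. \<bar>x i - y i\<bar> < min d1 d2) \<longrightarrow>
      (\<forall>i<s. \<bar>((G x)(p := F x)) i - ((G y)(p := F y)) i\<bar> < \<epsilon>)"
    using uG uF by simp
  moreover have "0 < min d1 d2" using \<open>d1 > 0\<close> \<open>d2 > 0\<close> by simp
  ultimately show "\<exists>\<delta>>0. \<forall>x\<in>cube s R. \<forall>y\<in>cube s R. (\<forall>i<s. \<bar>x i - y i\<bar> < \<delta>) \<longrightarrow>
      (\<forall>i<s. \<bar>((G x)(p := F x)) i - ((G y)(p := F y)) i\<bar> < \<epsilon>)"
    by blast
qed

lemma regular_approx_comp: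
  assumes "regular_approx \<sigma> s G1" "regular_approx \<sigma> s G2"
  shows "regular_approx \<sigma> s (\<lambda>x. G2 (G1 x))"
  using assms deep_approx_comp[of \<sigma> s G1 G2] cube_ucont_map_comp[of s G1 G2]
  unfolding regular_approx_def by blast

lemma regular_approx_cong:
  assumes "regular_approx \<sigma> s G" "\<And>x. G x = G' x"
  shows "regular_approx \<sigma> s G'"
  using assms(1) ext[of G G', OF assms(2)] by simp

definition identity_approx :: "(real \<Rightarrow> real) \<Rightarrow> bool" where
  "identity_approx \<sigma> \<longleftrightarrow>
     (\<forall>R \<eta>. 0 < \<eta> \<longrightarrow> (\<exists>a b c d. \<forall>u. \<bar>u\<bar> \<le> R \<longrightarrow> \<bar>c * \<sigma> (a * u + b) + d - u\<bar> \<le> \<eta>))"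

lemma MVT_between:
  fixes f f' :: "real \<Rightarrow> real"
  assumes "\<And>x. \<bar>x - a\<bar> \<le> \<bar>d\<bar> \<Longrightarrow> (f has_real_derivative f' x) (at x)"
  shows "\<exists>z. \<bar>z - a\<bar> \<le> \<bar>d\<bar> \<and> f (a + d) - f a = d * f' z"
proof (cases d "0 :: real" rule: linorder_cases)
  case less
  then obtain z where "a + d < z" "z < a" "f a - f (a + d) = (a - (a + d)) * f' z"
    using MVT2[of "a + d" a f f'] assms by force
  then show ?thesis using less by (intro exI[of _ z]) (auto simp: algebra_simps)
next
  case greater
  then obtain z where "a < z" "z < a + d" "f (a + d) - f a = (a + d - a) * f' z"
    using MVT2[of a "a + d" f f'] assms by force
  then show ?thesis by (intro exI[of _ z]) auto
qed simp

text \<open>Near a point where \<open>\<sigma>'\<close> is continuous and nonzero, \<open>\<sigma>\<close> is almost affine, so a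
  rescaled difference quotient of \<open>\<sigma>\<close> is close to the identity.\<close>
lemma identity_approx_if_deriv_nonzero:
  fixes \<sigma> :: "real \<Rightarrow> real"
  assumes U: "open U" "t0 \<in> U" and differentiable: "\<forall>t\<in>U. \<sigma> differentiable (at t)"
    and cont: "isCont (deriv \<sigma>) t0" and nonzero: "deriv \<sigma> t0 \<noteq> 0"
  shows "identity_approx \<sigma>"
  unfolding identity_approx_def
proof (intro allI impI)
  fix R \<eta> :: real assume "0 < \<eta>"
  define D where "D = deriv \<sigma> t0"
  define R1 where "R1 = \<bar>R\<bar> + 1"
  have R1: "0 < R1" unfolding R1_def by simp
  obtain r where r: "r > 0" "ball t0 r \<subseteq> U" using U open_contains_ball by blast
  have "0 < \<eta> * \<bar>D\<bar> / R1" using \<open>0 < \<eta>\<close> nonzero R1 by (simp add: D_def)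
  then obtain \<rho> where \<rho>: "\<rho> > 0" and near: "\<And>x. \<bar>x - t0\<bar> < \<rho> \<Longrightarrow> \<bar>deriv \<sigma> x - D\<bar> \<le> \<eta> * \<bar>D\<bar> / R1"
    using cont unfolding isCont_def LIM_eq D_def
    by (metis (no_types, lifting) diff_self abs_zero less_eq_real_def real_norm_def)
  define h where "h = min r \<rho> / (2 * R1)"
  have h: "0 < h" "h * R1 < min r \<rho>"
    unfolding h_def using r \<rho> R1 by (auto simp: field_simps min_def)
  have "\<bar>1 / (h * D) * \<sigma> (h * u + t0) + - \<sigma> t0 / (h * D) - u\<bar> \<le> \<eta>" if u: "\<bar>u\<bar> \<le> R" for u
  proof -
    have uR: "\<bar>u\<bar> \<le> R1" using u unfolding R1_def by simp
    have "\<bar>h * u\<bar> \<le> h * R1" using mult_left_mono[OF uR, of h] h(1) by (simp add: abs_mult)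
    then have hu: "\<bar>h * u\<bar> < min r \<rho>" using h(2) by linarith
    have "\<sigma> differentiable (at x)" if "\<bar>x - t0\<bar> \<le> \<bar>h * u\<bar>" for x
    proof -
      have "x \<in> ball t0 r" using that hu by (simp add: dist_real_def abs_minus_commute)
      then show ?thesis using differentiable r(2) by blast
    qed
    then obtain z where z: "\<bar>z - t0\<bar> \<le> \<bar>h * u\<bar>" and eq: "\<sigma> (t0 + h * u) - \<sigma> t0 = h * u * deriv \<sigma> z"
      using MVT_between[of t0 "h * u" \<sigma> "deriv \<sigma>"] by (auto simp: DERIV_deriv_iff_real_differentiable)
    have "1 / (h * D) * \<sigma> (h * u + t0) + - \<sigma> t0 / (h * D) - u = u * (deriv \<sigma> z - D) / D"
      using eq h nonzero by (simp add: D_def field_simps add.commute)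
    then have "\<bar>1 / (h * D) * \<sigma> (h * u + t0) + - \<sigma> t0 / (h * D) - u\<bar> = \<bar>u\<bar> * \<bar>deriv \<sigma> z - D\<bar> / \<bar>D\<bar>"
      by (simp add: abs_mult abs_divide)
    also have "\<dots> \<le> R1 * (\<eta> * \<bar>D\<bar> / R1) / \<bar>D\<bar>"
      using z hu near[of z] R1 by (intro divide_right_mono mult_mono uR) auto
    also have "\<dots> = \<eta>" using R1 nonzero by (simp add: D_def)
    finally show ?thesis .
  qed
  then show "\<exists>a b c d. \<forall>u. \<bar>u\<bar> \<le> R \<longrightarrow> \<bar>c * \<sigma> (a * u + b) + d - u\<bar> \<le> \<eta>" by blast
qed

definition neuron_update :: "(real \<Rightarrow> real) \<Rightarrow> nat \<Rightarrow> (nat \<Rightarrow> real) \<Rightarrow> real \<Rightarrow> real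
    \<Rightarrow> (nat \<Rightarrow> real) \<Rightarrow> real \<Rightarrow> (nat \<Rightarrow> real) \<Rightarrow> real" where
  "neuron_update \<sigma> s A q w B e x = (\<Sum>i<s. A i * x i) + q + w * \<sigma> ((\<Sum>i<s. B i * x i) + e)"

lemma sum_if_eq_mult:
  fixes x :: "nat \<Rightarrow> real"
  assumes "j < s" shows "(\<Sum>i<s. (if i = j then a else 0) * x i) = a * x j"
proof -
  have "(\<Sum>i<s. (if i = j then a else 0) * x i) = (\<Sum>i<s. if i = j then a * x i else 0)"
    by (rule sum.cong) auto
  then show ?thesis using assms by simp
qed

text \<open>The hidden layer has \<open>s + 1\<close> neurons: neuron \<open>j < s\<close> carries register \<open>j\<close> through
  \<open>\<sigma>\<close> in the almost affine regime, neuron \<open>s\<close> computes the new \<open>\<sigma>\<close>-term.\<close>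
lemma deep_net_neuron_update:
  assumes p: "p < s"
  shows "\<exists>\<Phi>. is_deep_net \<sigma> s (Suc s) s \<Phi> \<and> (\<forall>x i. i < s \<longrightarrow> \<Phi> x i =
    (if i = p then (\<Sum>j<s. A j * (c * \<sigma> (a * x j + b) + d)) + q + w * \<sigma> ((\<Sum>j<s. B j * x j) + e)
     else c * \<sigma> (a * x i + b) + d))"
proof -
  define W1 where "W1 = (\<lambda>j i. if j < s then (if i = j then a else 0) else B i)"
  define c1 where "c1 = (\<lambda>j. if j < s then b else e)"
  define W2 where "W2 = (\<lambda>i j. if i = p then (if j < s then A j * c else w) else (if j = i then c else 0))"
  define c2 where "c2 = (\<lambda>i. if i = p then q + (\<Sum>j<s. A j) * d else d)"
  define \<Phi> where "\<Phi> = (\<lambda>x. affine_map (Suc s) s W2 c2 (act \<sigma> (Suc s) (affine_map s (Suc s) W1 c1 x)))"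
  have "\<Phi> x i = (if i = p then (\<Sum>j<s. A j * (c * \<sigma> (a * x j + b) + d)) + q + w * \<sigma> ((\<Sum>j<s. B j * x j) + e)
      else c * \<sigma> (a * x i + b) + d)" if i: "i < s" for x i
  proof -
    define y where "y = act \<sigma> (Suc s) (affine_map s (Suc s) W1 c1 x)"
    have y: "y j = \<sigma> (a * x j + b)" if "j < s" for j
      using that unfolding y_def act_def affine_map_def W1_def c1_def by (simp add: sum_if_eq_mult)
    have ys: "y s = \<sigma> ((\<Sum>i<s. B i * x i) + e)"
      unfolding y_def act_def affine_map_def W1_def c1_def by simp
    have \<Phi>x: "\<Phi> x i = (\<Sum>j<s. W2 i j * y j) + W2 i s * y s + c2 i"
      unfolding \<Phi>_def y_def[symmetric] using i by (simp add: affine_map_def)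
    show ?thesis
    proof (cases "i = p")
      case True
      have "(\<Sum>j<s. W2 i j * y j) = (\<Sum>j<s. A j * c * \<sigma> (a * x j + b))"
        using True by (intro sum.cong) (auto simp: W2_def y)
      then show ?thesis using True \<Phi>x ys
        by (simp add: W2_def c2_def algebra_simps sum.distrib sum_distrib_left)
    next
      case False
      have "(\<Sum>j<s. W2 i j * y j) = (\<Sum>j<s. (if j = i then c else 0) * y j)"
        using False by (intro sum.cong) (auto simp: W2_def)
      then show ?thesis using False \<Phi>x i y[OF i] by (simp add: sum_if_eq_mult W2_def c2_def)
    qed
  qed
  moreover have "is_deep_net \<sigma> s (Suc s) s \<Phi>" unfolding \<Phi>_def by (rule deep_net_one_layer) auto
  ultimately show ?thesis by blast
qed

lemma deep_approx_neuron_update: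
  assumes id: "identity_approx \<sigma>" and p: "p < s"
  shows "deep_approx \<sigma> s (\<lambda>x. x(p := neuron_update \<sigma> s A q w B e x))"
  unfolding deep_approx_def
proof (intro allI impI)
  fix R \<epsilon> :: real assume "0 < \<epsilon>"
  define SA where "SA = (\<Sum>i<s. \<bar>A i\<bar>)"
  have SA: "0 \<le> SA" unfolding SA_def by (simp add: sum_nonneg)
  define \<eta> where "\<eta> = (\<epsilon> / 2) / (SA + 1)"
  have \<eta>0: "0 < \<eta>" unfolding \<eta>_def using \<open>0 < \<epsilon>\<close> SA by simp
  have "SA + 1 \<noteq> 0" using SA by linarith
  then have "(SA + 1) * \<eta> = \<epsilon> / 2"
    unfolding \<eta>_def by (simp add: field_simps)
  then have "SA * \<eta> + \<eta> = \<epsilon> / 2" by (simp add: distrib_right)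
  moreover have "0 \<le> SA * \<eta>" using SA \<eta>0 by simp
  ultimately have \<eta>: "\<eta> < \<epsilon>" "SA * \<eta> < \<epsilon>" using \<eta>0 \<open>0 < \<epsilon>\<close> by linarith+
  obtain a b c d where id_close: "\<And>u. \<bar>u\<bar> \<le> R \<Longrightarrow> \<bar>c * \<sigma> (a * u + b) + d - u\<bar> \<le> \<eta>"
    using id \<eta>0 unfolding identity_approx_def by blast
  obtain \<Phi> where net: "is_deep_net \<sigma> s (Suc s) s \<Phi>" and \<Phi>: "\<And>x i. i < s \<Longrightarrow> \<Phi> x i =
      (if i = p then (\<Sum>j<s. A j * (c * \<sigma> (a * x j + b) + d)) + q + w * \<sigma> ((\<Sum>j<s. B j * x j) + e)
       else c * \<sigma> (a * x i + b) + d)"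
    using deep_net_neuron_update[OF p] by blast
  have "\<bar>\<Phi> x i - (x(p := neuron_update \<sigma> s A q w B e x)) i\<bar> < \<epsilon>"
    if x: "x \<in> cube s R" and i: "i < s" for x i
  proof -
    have err: "\<bar>c * \<sigma> (a * x j + b) + d - x j\<bar> \<le> \<eta>" if "j < s" for j
      using id_close x that unfolding cube_def by blast
    show ?thesis
    proof (cases "i = p")
      case True
      have "\<Phi> x i - (x(p := neuron_update \<sigma> s A q w B e x)) i
          = (\<Sum>j<s. A j * (c * \<sigma> (a * x j + b) + d - x j))"
        using True \<Phi>[OF i] by (simp add: neuron_update_def right_diff_distrib sum_subtractf)
      also have "\<bar>\<dots>\<bar> \<le> (\<Sum>j<s. \<bar>A j\<bar> * \<eta>)"
        using err by (auto simp: abs_mult intro!: order_trans[OF sum_abs] sum_mono mult_left_mono)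
      also have "\<dots> = SA * \<eta>" unfolding SA_def by (simp add: sum_distrib_right)
      finally show ?thesis using \<eta> by linarith
    next
      case False
      then show ?thesis using \<Phi>[OF i] err[OF i] \<eta> by simp
    qed
  qed
  with net show "\<exists>\<Phi>. is_deep_net \<sigma> s (Suc s) s \<Phi> \<and>
      (\<forall>x\<in>cube s R. \<forall>i<s. \<bar>\<Phi> x i - (x(p := neuron_update \<sigma> s A q w B e x)) i\<bar> < \<epsilon>)"
    by blast
qed

lemma regular_approx_neuron_update:
  assumes "continuous_on UNIV \<sigma>" "identity_approx \<sigma>" "p < s"
  shows "regular_approx \<sigma> s (\<lambda>x. x(p := neuron_update \<sigma> s A q w B e x))"
  unfolding regular_approx_def neuron_update_def
  using deep_approx_neuron_update[OF assms(2,3)]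
  by (auto simp: neuron_update_def intro!: cube_ucont_map_update cube_ucont_map_id cube_ucont_add
      cube_ucont_linear cube_ucont_const cube_ucont_mult cube_ucont_compose[OF assms(1)] assms(3))

section \<open>Exponential polynomials\<close>

definition linform :: "nat \<Rightarrow> (nat \<Rightarrow> real) \<Rightarrow> (nat \<Rightarrow> real) \<Rightarrow> real" where
  "linform n a x = (\<Sum>j<n. a j * x j)"

definition exp_poly :: "nat \<Rightarrow> (real \<times> (nat \<Rightarrow> real)) list \<Rightarrow> (nat \<Rightarrow> real) \<Rightarrow> real" where
  "exp_poly n L x = sum_list (map (\<lambda>(c, a). c * exp (linform n a x)) L)"

lemma linform_cong: "(\<And>j. j < n \<Longrightarrow> y j = x j) \<Longrightarrow> linform n a y = linform n a x"
  unfolding linform_def by (intro sum.cong) auto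

lemma exp_poly_cong: "(\<And>j. j < n \<Longrightarrow> y j = x j) \<Longrightarrow> exp_poly n L y = exp_poly n L x"
  unfolding exp_poly_def using linform_cong[of n y x] by (induct L) auto

lemma exp_poly_Cons: "exp_poly n ((c, a) # L) x = c * exp (linform n a x) + exp_poly n L x"
  by (simp add: exp_poly_def)

lemma exp_poly_append: "exp_poly n (L1 @ L2) x = exp_poly n L1 x + exp_poly n L2 x"
  by (simp add: exp_poly_def)

definition exp_poly_mult :: "(real \<times> (nat \<Rightarrow> real)) list \<Rightarrow> (real \<times> (nat \<Rightarrow> real)) list
    \<Rightarrow> (real \<times> (nat \<Rightarrow> real)) list" where
  "exp_poly_mult L1 L2 = concat (map (\<lambda>(c1, a1). map (\<lambda>(c2, a2). (c1 * c2, \<lambda>j. a1 j + a2 j)) L2) L1)"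

lemma exp_poly_exp_poly_mult: "exp_poly n (exp_poly_mult L1 L2) x = exp_poly n L1 x * exp_poly n L2 x"
proof (induct L1)
  case Nil then show ?case by (simp add: exp_poly_mult_def exp_poly_def)
next
  case (Cons l L1)
  obtain c1 a1 where l: "l = (c1, a1)" by (cases l) auto
  have "linform n (\<lambda>j. a1 j + a2 j) x = linform n a1 x + linform n a2 x" for a2
    unfolding linform_def by (simp add: distrib_right sum.distrib)
  then have "exp_poly n (map (\<lambda>(c2, a2). (c1 * c2, \<lambda>j. a1 j + a2 j)) L2) x
      = c1 * exp (linform n a1 x) * exp_poly n L2 x"
    by (induct L2) (auto simp: exp_poly_def exp_add algebra_simps)
  then show ?case using Cons by (simp add: l exp_poly_mult_def exp_poly_append exp_poly_Cons algebra_simps)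
qed

lemma continuous_on_exp_poly: "continuous_on UNIV (exp_poly n L)"
proof (induct L)
  case Nil then show ?case by (simp add: exp_poly_def[abs_def])
next
  case (Cons l L)
  obtain c a where l: "l = (c, a)" by (cases l) auto
  have "continuous_on UNIV (linform n a)"
    unfolding linform_def[abs_def] by (intro continuous_intros continuous_on_product_coordinates)
  then show ?case unfolding l exp_poly_Cons[abs_def]
    by (intro continuous_intros Cons continuous_on_compose2[OF continuous_on_exp]) auto
qed

text \<open>Stone--Weierstrass: exponential polynomials form an algebra that separates the points of
  \<open>Rn n\<close>.\<close>
lemma exp_poly_dense:
  assumes S: "compact S" "S \<subseteq> Rn n" and f: "continuous_on S f" and \<epsilon>: "0 < \<epsilon>"
  shows "\<exists>L. \<forall>x\<in>S. \<bar>f x - exp_poly n L x\<bar> < \<epsilon>"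
proof -
  define P where "P g \<longleftrightarrow> (\<exists>L. g = exp_poly n L)" for g
  have "\<exists>g. P g \<and> (\<forall>x\<in>S. \<bar>f x - g x\<bar> < \<epsilon>)"
  proof (rule Stone_Weierstrass_HOL[OF S(1) _ _ _ _ _ f \<epsilon>])
    fix c :: real
    have "(\<lambda>x. c) = exp_poly n [(c, \<lambda>_. 0)]" by (rule ext) (simp add: exp_poly_def linform_def)
    then show "P (\<lambda>x. c)" unfolding P_def by blast
  next
    fix g assume "P g"
    then show "continuous_on S g" unfolding P_def using continuous_on_exp_poly continuous_on_subset by blast
  next
    fix g h assume "P g \<and> P h"
    then obtain L1 L2 where "g = exp_poly n L1" "h = exp_poly n L2" unfolding P_def by blast
    then have "(\<lambda>x. g x + h x) = exp_poly n (L1 @ L2)" "(\<lambda>x. g x * h x) = exp_poly n (exp_poly_mult L1 L2)"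
      by (auto simp: exp_poly_append exp_poly_exp_poly_mult)
    then show "P (\<lambda>x. g x + h x)" "P (\<lambda>x. g x * h x)" unfolding P_def by blast+
  next
    fix x y assume xy: "x \<in> S \<and> y \<in> S \<and> x \<noteq> y"
    then obtain j where j: "x j \<noteq> y j" by blast
    have "j < n"
    proof (rule ccontr)
      assume "\<not> j < n"
      then have "x j = 0" "y j = 0" using xy S(2) unfolding Rn_def by auto
      with j show False by simp
    qed
    then have "linform n (\<lambda>i. if i = j then 1 else 0) v = v j" for v
      unfolding linform_def using sum_if_eq_mult[of j n 1 v] by simp
    then have "exp_poly n [(1, \<lambda>i. if i = j then 1 else 0)] x \<noteq> exp_poly n [(1, \<lambda>i. if i = j then 1 else 0)] y"
      using j by (simp add: exp_poly_def)
    then show "\<exists>g. P g \<and> g x \<noteq> g y" unfolding P_def by blast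
  qed
  then show ?thesis unfolding P_def by blast
qed

section \<open>A register machine\<close>

definition ridge_sum2 :: "(real \<Rightarrow> real) \<Rightarrow> (real \<times> real \<times> real \<times> real) list \<Rightarrow> real \<Rightarrow> real \<Rightarrow> real" where
  "ridge_sum2 \<sigma> L y t = sum_list (map (\<lambda>(c, \<alpha>, \<beta>, \<gamma>). c * \<sigma> (\<alpha> * y + \<beta> * t + \<gamma>)) L)"

lemma ridge_sum2_Cons:
  "ridge_sum2 \<sigma> ((c, \<alpha>, \<beta>, \<gamma>) # L) y t = c * \<sigma> (\<alpha> * y + \<beta> * t + \<gamma>) + ridge_sum2 \<sigma> L y t"
  by (simp add: ridge_sum2_def)

text \<open>Polarization: \<open>t y = ((t + y)\<^sup>2 - (t - y)\<^sup>2) / 4\<close>.\<close>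
lemma ridge_sum2_approx_product:
  assumes square: "shallow_approx \<sigma> (\<lambda>u. u^2)" and \<epsilon>: "0 < \<epsilon>"
  shows "\<exists>L. \<forall>y t. \<bar>y\<bar> \<le> R \<and> \<bar>t\<bar> \<le> R \<longrightarrow> \<bar>ridge_sum2 \<sigma> L y t - t * y\<bar> < \<epsilon>"
proof -
  obtain L where L: "\<And>u. \<bar>u\<bar> \<le> 2*R \<Longrightarrow> \<bar>u^2 - ridge_sum \<sigma> L u\<bar> < 2*\<epsilon>"
    using square \<epsilon> unfolding shallow_approx_def by (meson mult_pos_pos zero_less_numeral)
  define L2 where "L2 = map (\<lambda>(c, a, b). (c/4, a, a, b)) L @ map (\<lambda>(c, a, b). (-c/4, -a, a, b)) L"
  have "ridge_sum2 \<sigma> (map (\<lambda>(c, a, b). (c/4, a, a, b)) L) y t = ridge_sum \<sigma> L (t+y) / 4"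
    "ridge_sum2 \<sigma> (map (\<lambda>(c, a, b). (-c/4, -a, a, b)) L) y t = - ridge_sum \<sigma> L (t-y) / 4" for y t
    by (induct L) (auto simp: ridge_sum2_def ridge_sum_def algebra_simps add_divide_distrib)
  then have "ridge_sum2 \<sigma> L2 y t = ridge_sum \<sigma> L (t+y) / 4 - ridge_sum \<sigma> L (t-y) / 4" for y t
    unfolding L2_def by (simp add: ridge_sum2_def)
  note L2 = this
  have "\<bar>ridge_sum2 \<sigma> L2 y t - t * y\<bar> < \<epsilon>" if "\<bar>y\<bar> \<le> R" "\<bar>t\<bar> \<le> R" for y t
  proof -
    have "\<bar>t+y\<bar> \<le> 2*R" "\<bar>t-y\<bar> \<le> 2*R" using that by linarith+
    then have "\<bar>(t+y)^2 - ridge_sum \<sigma> L (t+y)\<bar> < 2*\<epsilon>" "\<bar>(t-y)^2 - ridge_sum \<sigma> L (t-y)\<bar> < 2*\<epsilon>"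
      using L by blast+
    moreover have "t * y = (t+y)^2 / 4 - (t-y)^2 / 4" by (simp add: power2_eq_square field_simps)
    ultimately show ?thesis unfolding L2 by linarith
  qed
  then show ?thesis by blast
qed

lemma uniform_exp_limit:
  assumes \<epsilon>: "0 < \<epsilon>"
  shows "\<exists>N::nat. 0 < N \<and> (\<forall>t. \<bar>t\<bar> \<le> T \<longrightarrow> \<bar>(1 + t / N)^N - exp t\<bar> < \<epsilon>)"
proof -
  define T1 where "T1 = \<bar>T\<bar> + 1"
  have T1: "1 \<le> T1" unfolding T1_def by simp
  define K where "K = 2 * T1^2 * exp (T1 + 1)"
  have K: "0 < K" unfolding K_def using T1 by simp
  obtain N :: nat where N: "2 * T1^2 + K / \<epsilon> + 1 < N" using reals_Archimedean2 by blast
  have "0 \<le> K / \<epsilon>" "T1 \<le> T1^2" using K \<epsilon> T1 by (simp_all add: power2_eq_square)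
  then have N0: "0 < real N" and NT: "2 * T1 < N" and NK: "K / \<epsilon> < N" and NT2: "2 * T1^2 \<le> N"
    using N T1 by linarith+
  have "\<bar>(1 + t / N)^N - exp t\<bar> < \<epsilon>" if t: "\<bar>t\<bar> \<le> T" for t
  proof -
    have tT: "\<bar>t\<bar> \<le> T1" using t unfolding T1_def by simp
    define u where "u = t / N"
    have u2: "\<bar>u\<bar> \<le> 1/2" unfolding u_def using tT NT N0 by (simp add: abs_divide field_simps)
    then have "(1 + u)^N = exp (N * ln (1 + u))"
      by (simp add: exp_of_nat_mult ln_realpow[symmetric] abs_le_iff)
    define d where "d = N * ln (1 + u) - t"
    have "d = N * (ln (1 + u) - u)" unfolding d_def u_def using N0 by (simp add: field_simps)
    then have "\<bar>d\<bar> \<le> N * (2 * u^2)"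
      using abs_ln_one_plus_x_minus_x_bound[OF u2] N0 by (simp add: abs_mult mult_left_mono)
    also have "N * (2 * u^2) = 2 * t^2 / N" unfolding u_def using N0 by (simp add: power2_eq_square field_simps)
    also have "\<dots> \<le> 2 * T1^2 / N"
      using tT N0 by (intro divide_right_mono mult_left_mono) (auto simp: abs_le_square_iff[symmetric])
    finally have d: "\<bar>d\<bar> \<le> 2 * T1^2 / N" .
    moreover have "2 * T1^2 / N \<le> 1" using NT2 N0 by simp
    ultimately have "\<bar>d\<bar> \<le> 1" by linarith
    obtain z where z: "\<bar>z - t\<bar> \<le> \<bar>d\<bar>" and ez: "exp (t + d) - exp t = d * exp z"
      using MVT_between[of t d exp exp] by (auto intro: DERIV_exp)
    have "z \<le> T1 + 1" using z \<open>\<bar>d\<bar> \<le> 1\<close> tT by linarith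
    have "\<bar>(1 + t / N)^N - exp t\<bar> = \<bar>d\<bar> * exp z"
      using ez \<open>(1 + u)^N = _\<close> unfolding d_def u_def by (simp add: abs_mult)
    also have "\<dots> \<le> (2 * T1^2 / N) * exp (T1 + 1)" using d \<open>z \<le> T1 + 1\<close> by (intro mult_mono) auto
    also have "\<dots> = K / N" unfolding K_def by simp
    also have "\<dots> < \<epsilon>" using NK \<epsilon> N0 by (simp add: field_simps)
    finally show ?thesis .
  qed
  with N0 show ?thesis by auto
qed

lemma sum_truncated:
  fixes x :: "nat \<Rightarrow> real"
  assumes "n \<le> s"
  shows "(\<Sum>i<s. (if i < n then a i else 0) * x i) = (\<Sum>i<n. a i * x i)"
proof -
  have "(\<Sum>i<s. (if i < n then a i else 0) * x i) = (\<Sum>i\<in>{..<s} \<inter> {i. i < n}. a i * x i)"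
    by (simp add: sum.If_cases if_distrib[of "\<lambda>t. t * _"])
  also have "{..<s} \<inter> {i. i < n} = {..<n}" using assms by auto
  finally show ?thesis .
qed

text \<open>Registers \<open>0, \<dots>, n - 1\<close> hold the input and are never changed; \<open>out\<close> is the
  register being computed and \<open>tmp\<close> a scratch register.\<close>
locale registers =
  fixes \<sigma> :: "real \<Rightarrow> real" and n s out tmp :: nat
  assumes continuous: "continuous_on UNIV \<sigma>" and identity: "identity_approx \<sigma>"
    and square: "shallow_approx \<sigma> (\<lambda>u. u^2)"
    and out: "n \<le> out" "out < s" and tmp: "n \<le> tmp" "tmp < s" and out_tmp: "out \<noteq> tmp"
begin

lemma regular_approx_update: "p < s \<Longrightarrow> regular_approx \<sigma> s (\<lambda>x. x(p := neuron_update \<sigma> s A q w B e x))"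
  by (rule regular_approx_neuron_update[OF continuous identity])

lemma regular_approx_id: "regular_approx \<sigma> s (\<lambda>x. x)"
  using regular_approx_update[OF tmp(2), of "\<lambda>i. if i = tmp then 1 else 0" 0 0 "\<lambda>_. 0" 0]
  by (simp add: neuron_update_def sum_if_eq_mult[OF tmp(2)])

lemma regular_approx_clear_tmp: "regular_approx \<sigma> s (\<lambda>x. x(tmp := 0))"
  using regular_approx_update[OF tmp(2), of "\<lambda>_. 0" 0 0 "\<lambda>_. 0" 0] by (simp add: neuron_update_def)

lemma linform_update: "p \<ge> n \<Longrightarrow> linform n a (x(p := v)) = linform n a x"
  by (rule linform_cong) auto

lemma regular_approx_add_neuron:
  "regular_approx \<sigma> s (\<lambda>x. x(tmp := x tmp + c * \<sigma> (\<alpha> * x out + \<beta> * linform n a x + \<gamma>)))"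
proof -
  have "(\<Sum>i<s. ((if i = out then \<alpha> else 0) + (if i < n then \<beta> * a i else 0)) * x i)
      = \<alpha> * x out + \<beta> * linform n a x" for x
    using sum_if_eq_mult[OF out(2)] sum_truncated[of n s "\<lambda>i. \<beta> * a i" x] out
    by (simp add: distrib_right sum.distrib linform_def sum_distrib_left mult.assoc)
  then show ?thesis
    using regular_approx_update[OF tmp(2), of "\<lambda>i. if i = tmp then 1 else 0" 0 c
        "\<lambda>i. (if i = out then \<alpha> else 0) + (if i < n then \<beta> * a i else 0)" \<gamma>]
    by (simp add: neuron_update_def sum_if_eq_mult[OF tmp(2)])
qed

lemma regular_approx_add_neurons:
  "regular_approx \<sigma> s (\<lambda>x. x(tmp := x tmp + ridge_sum2 \<sigma> L (x out) (linform n a x)))"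
proof (induct L)
  case Nil
  then show ?case using regular_approx_id by (simp add: ridge_sum2_def)
next
  case (Cons l L)
  obtain c \<alpha> \<beta> \<gamma> where l: "l = (c, \<alpha>, \<beta>, \<gamma>)" by (cases l) auto
  show ?case
  proof (rule regular_approx_cong[OF regular_approx_comp[OF regular_approx_add_neuron[of c \<alpha> \<beta> a \<gamma>] Cons]])
    fix x
    let ?x = "x(tmp := x tmp + c * \<sigma> (\<alpha> * x out + \<beta> * linform n a x + \<gamma>))"
    show "?x(tmp := ?x tmp + ridge_sum2 \<sigma> L (?x out) (linform n a ?x)) =
      x(tmp := x tmp + ridge_sum2 \<sigma> (l # L) (x out) (linform n a x))"
      using out_tmp by (simp add: l ridge_sum2_Cons linform_update[OF tmp(1)] algebra_simps)
  qed
qed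

lemma cube_ucont_linform: "cube_ucont s (linform n a)"
  unfolding linform_def[abs_def] by (rule cube_ucont_linear)

lemma linform_bound:
  assumes "x \<in> cube s R" shows "\<bar>linform n a x\<bar> \<le> (\<Sum>j<n. \<bar>a j\<bar>) * \<bar>R\<bar>"
proof -
  have "\<bar>x j\<bar> \<le> \<bar>R\<bar>" if "j < n" for j
  proof -
    have "j < s" using that out by linarith
    then have "\<bar>x j\<bar> \<le> R" using assms unfolding cube_def by blast
    then show ?thesis by linarith
  qed
  then show ?thesis unfolding linform_def sum_distrib_right
    by (intro order_trans[OF sum_abs] sum_mono) (auto simp: abs_mult intro!: mult_left_mono)
qed

lemma out_bound: "x \<in> cube s R \<Longrightarrow> \<bar>x out\<bar> \<le> \<bar>R\<bar>"
  using out unfolding cube_def by force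

lemma regular_approx_add_scaled_neurons:
  "regular_approx \<sigma> s (\<lambda>x. (x(out := x out + \<tau> * ridge_sum2 \<sigma> L (x out) (linform n a x)))(tmp := 0))"
proof -
  have "regular_approx \<sigma> s (\<lambda>x. x(out := neuron_update \<sigma> s (\<lambda>i. if i = out then 1 else if i = tmp then \<tau> else 0)
      0 0 (\<lambda>_. 0) 0 x))"
    by (rule regular_approx_update[OF out(2)])
  moreover have "neuron_update \<sigma> s (\<lambda>i. if i = out then 1 else if i = tmp then \<tau> else 0) 0 0 (\<lambda>_. 0) 0 x
      = x out + \<tau> * x tmp" for x
  proof -
    have "(\<lambda>i. if i = out then 1 else if i = tmp then \<tau> else 0) =
        (\<lambda>i. (if i = out then 1 else 0) + (if i = tmp then \<tau> else 0))"
      using out_tmp by auto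
    then show ?thesis using sum_if_eq_mult[OF out(2)] sum_if_eq_mult[OF tmp(2)]
      by (simp add: neuron_update_def distrib_right sum.distrib)
  qed
  ultimately have add_tmp: "regular_approx \<sigma> s (\<lambda>x. x(out := x out + \<tau> * x tmp))" by simp
  show ?thesis
    by (rule regular_approx_cong[OF regular_approx_comp[OF regular_approx_comp[OF regular_approx_comp[OF
          regular_approx_clear_tmp regular_approx_add_neurons[of L a]] add_tmp] regular_approx_clear_tmp]])
      (use out_tmp in \<open>simp add: linform_update[OF tmp(1)]\<close>)
qed

definition euler_step :: "real \<Rightarrow> (nat \<Rightarrow> real) \<Rightarrow> (nat \<Rightarrow> real) \<Rightarrow> (nat \<Rightarrow> real)" where
  "euler_step \<tau> a x = (x(out := x out + \<tau> * linform n a x * x out))(tmp := 0)"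

lemma regular_approx_euler_step: "regular_approx \<sigma> s (euler_step \<tau> a)"
  unfolding regular_approx_def
proof
  show "cube_ucont_map s (euler_step \<tau> a)"
    unfolding euler_step_def
    by (intro cube_ucont_map_update cube_ucont_map_id cube_ucont_add cube_ucont_mult cube_ucont_const
        cube_ucont_coord cube_ucont_linform out(2) tmp(2))
  show "deep_approx \<sigma> s (euler_step \<tau> a)"
  proof (rule deep_approx_limit)
    fix R \<epsilon> :: real assume "0 < \<epsilon>"
    define R2 where "R2 = max \<bar>R\<bar> ((\<Sum>j<n. \<bar>a j\<bar>) * \<bar>R\<bar>)"
    have "0 < \<epsilon> / (\<bar>\<tau>\<bar> + 1)" using \<open>0 < \<epsilon>\<close> by simp
    then obtain L where L: "\<And>y t. \<bar>y\<bar> \<le> R2 \<and> \<bar>t\<bar> \<le> R2 \<Longrightarrow>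
        \<bar>ridge_sum2 \<sigma> L y t - t * y\<bar> < \<epsilon> / (\<bar>\<tau>\<bar> + 1)"
      using ridge_sum2_approx_product[OF square] by blast
    define G where "G x = (x(out := x out + \<tau> * ridge_sum2 \<sigma> L (x out) (linform n a x)))(tmp := 0)" for x
    have "\<bar>euler_step \<tau> a x i - G x i\<bar> < \<epsilon>" if x: "x \<in> cube s R" for x i
    proof (cases "i = out")
      case True
      have "\<bar>ridge_sum2 \<sigma> L (x out) (linform n a x) - linform n a x * x out\<bar> < \<epsilon> / (\<bar>\<tau>\<bar> + 1)"
        using L out_bound[OF x] linform_bound[OF x, of a] unfolding R2_def by (simp add: le_max_iff_disj)
      then have "\<bar>\<tau>\<bar> * \<bar>ridge_sum2 \<sigma> L (x out) (linform n a x) - linform n a x * x out\<bar> < \<epsilon>"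
        using \<open>0 < \<epsilon>\<close> by (simp add: field_simps)
      moreover have "euler_step \<tau> a x i - G x i
          = \<tau> * (linform n a x * x out - ridge_sum2 \<sigma> L (x out) (linform n a x))"
        using True out_tmp by (simp add: euler_step_def G_def algebra_simps)
      ultimately show ?thesis by (simp add: abs_mult abs_minus_commute)
    qed (use \<open>0 < \<epsilon>\<close> in \<open>simp add: euler_step_def G_def\<close>)
    moreover have "deep_approx \<sigma> s G"
      using regular_approx_add_scaled_neurons unfolding G_def[abs_def] regular_approx_def by blast
    ultimately show "\<exists>G. deep_approx \<sigma> s G \<and> (\<forall>x\<in>cube s R. \<forall>i<s. \<bar>euler_step \<tau> a x i - G x i\<bar> < \<epsilon>)"
      by blast
  qed
qed

lemma euler_step_power:
  "(euler_step \<tau> a ^^ Suc k) x = (x(out := x out * (1 + \<tau> * linform n a x) ^ Suc k))(tmp := 0)"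
proof (induct k)
  case 0 then show ?case by (intro ext) (simp add: euler_step_def algebra_simps)
next
  case (Suc k)
  have "(euler_step \<tau> a ^^ Suc (Suc k)) x = euler_step \<tau> a ((euler_step \<tau> a ^^ Suc k) x)" by simp
  also have "\<dots> = (x(out := x out * (1 + \<tau> * linform n a x) ^ Suc (Suc k)))(tmp := 0)"
    unfolding Suc using out_tmp by (simp add: euler_step_def linform_update out(1) tmp(1) algebra_simps)
  finally show ?case .
qed

lemma regular_approx_euler_step_power: "regular_approx \<sigma> s (euler_step \<tau> a ^^ Suc k)"
proof (induct k)
  case 0 then show ?case using regular_approx_euler_step by simp
next
  case (Suc k)
  then show ?case
    by (rule regular_approx_cong[OF regular_approx_comp[OF _ regular_approx_euler_step]]) simp
qed

definition mult_exp :: "(nat \<Rightarrow> real) \<Rightarrow> (nat \<Rightarrow> real) \<Rightarrow> (nat \<Rightarrow> real)" where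
  "mult_exp a x = (x(out := x out * exp (linform n a x)))(tmp := 0)"

text \<open>Multiplication by \<open>exp\<close> of a linear form is the limit of \<open>N\<close> Euler steps of size \<open>1/N\<close>.\<close>
lemma regular_approx_mult_exp: "regular_approx \<sigma> s (mult_exp a)"
  unfolding regular_approx_def
proof
  show "cube_ucont_map s (mult_exp a)"
    unfolding mult_exp_def
    by (intro cube_ucont_map_update cube_ucont_map_id cube_ucont_mult cube_ucont_const cube_ucont_coord
        cube_ucont_compose[OF continuous_on_exp] continuous_on_id cube_ucont_linform out(2) tmp(2))
  show "deep_approx \<sigma> s (mult_exp a)"
  proof (rule deep_approx_limit)
    fix R \<epsilon> :: real assume "0 < \<epsilon>"
    then have "0 < \<epsilon> / (\<bar>R\<bar> + 1)" by simp
    then obtain N :: nat where "0 < N" and N: "\<And>t. \<bar>t\<bar> \<le> (\<Sum>j<n. \<bar>a j\<bar>) * \<bar>R\<bar> \<Longrightarrow>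
        \<bar>(1 + t / N) ^ N - exp t\<bar> < \<epsilon> / (\<bar>R\<bar> + 1)"
      using uniform_exp_limit by blast
    then obtain k where k: "N = Suc k" by (cases N) auto
    have "\<bar>mult_exp a x i - (euler_step (1 / N) a ^^ Suc k) x i\<bar> < \<epsilon>" if x: "x \<in> cube s R" for x i
    proof (cases "i = out")
      case True
      have "(euler_step (1 / N) a ^^ Suc k) x i = x out * (1 + linform n a x / N) ^ N"
        unfolding euler_step_power k using True out_tmp by simp
      then have "mult_exp a x i - (euler_step (1 / N) a ^^ Suc k) x i
          = x out * (exp (linform n a x) - (1 + linform n a x / N) ^ N)"
        using True out_tmp by (simp add: mult_exp_def right_diff_distrib)
      then have "\<bar>mult_exp a x i - (euler_step (1 / N) a ^^ Suc k) x i\<bar>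
          = \<bar>x out\<bar> * \<bar>(1 + linform n a x / N) ^ N - exp (linform n a x)\<bar>"
        by (simp add: abs_mult abs_minus_commute)
      also have "\<dots> \<le> \<bar>R\<bar> * (\<epsilon> / (\<bar>R\<bar> + 1))"
        using out_bound[OF x] N[OF linform_bound[OF x]] by (intro mult_mono) auto
      also have "\<dots> < \<epsilon>" using \<open>0 < \<epsilon>\<close> by (simp add: field_simps)
      finally show ?thesis .
    qed (use \<open>0 < \<epsilon>\<close> in \<open>simp add: euler_step_power mult_exp_def del: funpow.simps\<close>)
    moreover have "deep_approx \<sigma> s (euler_step (1 / N) a ^^ Suc k)"
      using regular_approx_euler_step_power unfolding regular_approx_def by blast
    ultimately show "\<exists>G. deep_approx \<sigma> s G \<and> (\<forall>x\<in>cube s R. \<forall>i<s. \<bar>mult_exp a x i - G x i\<bar> < \<epsilon>)"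
      by blast
  qed
qed

lemma regular_approx_add_const: "regular_approx \<sigma> s (\<lambda>x. (x(out := x out + c))(tmp := 0))"
  using regular_approx_comp[OF regular_approx_update[OF out(2), of "\<lambda>i. if i = out then 1 else 0" c 0 "\<lambda>_. 0" 0]
      regular_approx_clear_tmp]
  by (simp add: neuron_update_def sum_if_eq_mult[OF out(2)])

text \<open>\<open>(y e\<^sup>-\<^sup>l + c) e\<^sup>l = y + c e\<^sup>l\<close>\<close>
lemma regular_approx_add_exp: "regular_approx \<sigma> s (\<lambda>x. (x(out := x out + c * exp (linform n a x)))(tmp := 0))"
proof (rule regular_approx_cong[OF regular_approx_comp[OF regular_approx_comp[OF
        regular_approx_mult_exp[of "\<lambda>j. - a j"] regular_approx_add_const[of c]] regular_approx_mult_exp[of a]]])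
  fix x
  have "linform n (\<lambda>j. - a j) x = - linform n a x" unfolding linform_def by (simp add: sum_negf)
  moreover have "exp (- linform n a x) * exp (linform n a x) = 1" by (simp add: exp_minus field_simps)
  ultimately show "mult_exp a ((mult_exp (\<lambda>j. - a j) x)(out := mult_exp (\<lambda>j. - a j) x out + c, tmp := 0)) =
      (x(out := x out + c * exp (linform n a x)))(tmp := 0)"
    using out_tmp by (simp add: mult_exp_def linform_update out(1) tmp(1) algebra_simps)
qed

lemma regular_approx_add_exp_poly: "regular_approx \<sigma> s (\<lambda>x. (x(out := x out + exp_poly n L x))(tmp := 0))"
proof (induct L)
  case Nil
  show ?case by (rule regular_approx_cong[OF regular_approx_clear_tmp]) (simp add: exp_poly_def fun_upd_def)
next
  case (Cons l L)
  obtain c a where l: "l = (c, a)" by (cases l) auto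
  show ?case
  proof (rule regular_approx_cong[OF regular_approx_comp[OF regular_approx_add_exp[of c a] Cons]])
    fix x
    have "exp_poly n L ((x(out := x out + c * exp (linform n a x)))(tmp := 0)) = exp_poly n L x"
      by (rule exp_poly_cong) (use out(1) tmp(1) in auto)
    then show "((x(out := x out + c * exp (linform n a x)))(tmp := 0))
        (out := ((x(out := x out + c * exp (linform n a x)))(tmp := 0)) out
          + exp_poly n L ((x(out := x out + c * exp (linform n a x)))(tmp := 0)), tmp := 0) =
        (x(out := x out + exp_poly n (l # L) x))(tmp := 0)"
      using out_tmp by (simp add: l exp_poly_Cons algebra_simps)
  qed
qed

end

section \<open>Approximation on compact sets\<close>

definition add_exp_polys :: "nat \<Rightarrow> nat \<Rightarrow> (nat \<Rightarrow> (real \<times> (nat \<Rightarrow> real)) list) \<Rightarrow> nat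
    \<Rightarrow> (nat \<Rightarrow> real) \<Rightarrow> (nat \<Rightarrow> real)" where
  "add_exp_polys n m Ls j x = (\<lambda>i. if n \<le> i \<and> i < n + j then x i + exp_poly n (Ls (i - n)) x
                                else if i = n + m then 0 else x i)"

lemma regular_approx_add_exp_polys:
  assumes \<sigma>: "continuous_on UNIV \<sigma>" "identity_approx \<sigma>" "shallow_approx \<sigma> (\<lambda>u. u^2)" and "1 \<le> m"
  shows "j \<le> m \<Longrightarrow> regular_approx \<sigma> (n + m + 1) (add_exp_polys n m Ls j)"
proof (induct j)
  case 0
  interpret registers \<sigma> n "n + m + 1" n "n + m"
    by unfold_locales (use \<sigma> \<open>1 \<le> m\<close> in auto)
  show ?case by (rule regular_approx_cong[OF regular_approx_clear_tmp]) (auto simp: add_exp_polys_def)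
next
  case (Suc j)
  interpret registers \<sigma> n "n + m + 1" "n + j" "n + m"
    by unfold_locales (use \<sigma> Suc(2) in auto)
  show ?case
  proof (rule regular_approx_cong[OF regular_approx_comp[OF Suc(1) regular_approx_add_exp_poly]])
    fix x
    have "exp_poly n (Ls j) (add_exp_polys n m Ls j x) = exp_poly n (Ls j) x"
      by (rule exp_poly_cong) (simp add: add_exp_polys_def)
    then show "((add_exp_polys n m Ls j x)(n + j := add_exp_polys n m Ls j x (n + j)
          + exp_poly n (Ls j) (add_exp_polys n m Ls j x)))(n + m := 0) = add_exp_polys n m Ls (Suc j) x"
      using Suc(2) by (intro ext) (auto simp: add_exp_polys_def)
  qed (use Suc(2) in simp)
qed

text \<open>The input is embedded into \<open>n + m + 1\<close> registers and the \<open>m\<close> output registers are read off,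
  so the hidden layers have width \<open>n + m + 2\<close>.\<close>
lemma deep_net_approx_exp_polys:
  assumes \<sigma>: "continuous_on UNIV \<sigma>" "identity_approx \<sigma>" "shallow_approx \<sigma> (\<lambda>u. u^2)"
    and "1 \<le> m" "0 < \<epsilon>" "0 \<le> R"
  shows "\<exists>H. is_deep_net \<sigma> n (n + m + 2) m H \<and>
    (\<forall>v\<in>cube n R. \<forall>k<m. \<bar>H v k - exp_poly n (Ls k) v\<bar> < \<epsilon>)"
proof -
  define s where "s = n + m + 1"
  have "deep_approx \<sigma> s (add_exp_polys n m Ls m)"
    using regular_approx_add_exp_polys[OF \<sigma> \<open>1 \<le> m\<close>] unfolding s_def regular_approx_def by blast
  then obtain N where N: "is_deep_net \<sigma> s (Suc s) s N"
    and close: "\<forall>x\<in>cube s R. \<forall>i<s. \<bar>N x i - add_exp_polys n m Ls m x i\<bar> < \<epsilon>"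
    using \<open>0 < \<epsilon>\<close> unfolding deep_approx_def by blast
  define embed where "embed = affine_map n s (\<lambda>j i. if i = j then 1 else 0) (\<lambda>_. 0)"
  define H where "H = (\<lambda>v. affine_map s m (\<lambda>k i. if i = n + k then 1 else 0) (\<lambda>_. 0) (N (embed v)))"
  have "is_deep_net \<sigma> n (Suc s) m H"
    unfolding H_def embed_def by (intro deep_net_affine_post deep_net_affine_pre N)
  moreover have "\<bar>H v k - exp_poly n (Ls k) v\<bar> < \<epsilon>" if v: "v \<in> cube n R" and k: "k < m" for v k
  proof -
    have embed: "embed v j = (if j < n then v j else 0)" for j
    proof (cases "j < n")
      case True
      then show ?thesis using sum_if_eq_mult[OF True, of 1 v] by (simp add: embed_def affine_map_def s_def)
    qed (auto simp: embed_def affine_map_def intro!: sum.neutral)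
    then have "embed v \<in> cube s R" using v \<open>0 \<le> R\<close> unfolding cube_def s_def by auto
    moreover have nk: "n + k < s" unfolding s_def using k by simp
    ultimately have "\<bar>N (embed v) (n + k) - add_exp_polys n m Ls m (embed v) (n + k)\<bar> < \<epsilon>"
      using close by blast
    moreover have "H v k = N (embed v) (n + k)"
      using sum_if_eq_mult[OF nk, of 1 "N (embed v)"] k by (simp add: H_def affine_map_def)
    moreover have "add_exp_polys n m Ls m (embed v) (n + k) = exp_poly n (Ls k) v"
      using k exp_poly_cong[of n "embed v" v] by (simp add: add_exp_polys_def embed)
    ultimately show ?thesis by simp
  qed
  moreover have "Suc s = n + m + 2" unfolding s_def by simp
  ultimately show ?thesis by auto
qed

lemma compact_subset_cube:
  assumes "compact C" "C \<subseteq> Rn n"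
  obtains R where "0 \<le> R" "C \<subseteq> cube n R"
proof -
  have "continuous_on C (\<lambda>v. \<Sum>j<n. \<bar>v j\<bar>)"
    by (intro continuous_intros continuous_on_product_then_coordinatewise[OF continuous_on_id])
  then have "bounded ((\<lambda>v. \<Sum>j<n. \<bar>v j\<bar>) ` C)"
    using assms(1) by (intro compact_imp_bounded compact_continuous_image)
  then obtain R where R: "\<And>v. v \<in> C \<Longrightarrow> (\<Sum>j<n. \<bar>v j\<bar>) \<le> R"
    unfolding bounded_iff by fastforce
  have "\<bar>v j\<bar> \<le> max R 0" if "v \<in> C" "j < n" for v j
    using member_le_sum[of j "{..<n}" "\<lambda>j. \<bar>v j\<bar>"] R[OF that(1)] that(2) by simp
  then have "C \<subseteq> cube n (max R 0)" using assms(2) unfolding cube_def Rn_def by auto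
  then show ?thesis by (rule that[rotated]) simp
qed

lemma vnorm_less:
  assumes "1 \<le> m" "\<And>k. k < m \<Longrightarrow> \<bar>v k\<bar> < \<delta>"
  shows "vnorm m v < m * \<delta>"
proof -
  have "vnorm m v \<le> (\<Sum>k<m. \<bar>v k\<bar>)"
    unfolding vnorm_def using L2_set_le_sum_abs[of v "{..<m}"] by (simp add: L2_set_def)
  also have "\<dots> < (\<Sum>k<m. \<delta>)"
    using assms by (intro sum_strict_mono) (auto simp: lessThan_empty_iff)
  finally show ?thesis by simp
qed

lemma vnorm_diff_triangle: "vnorm m (a - c) \<le> vnorm m (a - b) + vnorm m (b - c)"
  unfolding vnorm_def using L2_set_triangle_ineq[of "a - b" "b - c" "{..<m}"] by (simp add: L2_set_def)

theorem deep_narrow_net_approx: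
  fixes u :: "(nat \<Rightarrow> real) \<Rightarrow> (nat \<Rightarrow> real)"
  assumes \<sigma>: "continuous_on UNIV \<sigma>" and nonaffine: "\<not> (\<exists>a c. \<forall>t. \<sigma> t = a * t + c)"
    and deriv: "open U" "t0 \<in> U" "\<forall>t\<in>U. \<sigma> differentiable (at t)" "isCont (deriv \<sigma>) t0" "deriv \<sigma> t0 \<noteq> 0"
    and "1 \<le> m" and C: "compact C" "C \<subseteq> Rn n" and u: "continuous_on C u" and "0 < \<epsilon>"
  shows "\<exists>H. is_deep_net \<sigma> n (n + m + 2) m H \<and> (\<forall>v\<in>C. vnorm m (u v - H v) < \<epsilon>)"
proof -
  define \<delta> where "\<delta> = \<epsilon> / (2 * m)"
  have "0 < \<delta>" unfolding \<delta>_def using \<open>0 < \<epsilon>\<close> \<open>1 \<le> m\<close> by simp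
  have "\<exists>L. \<forall>v\<in>C. \<bar>u v k - exp_poly n L v\<bar> < \<delta>" for k
    using exp_poly_dense[OF C continuous_on_product_then_coordinatewise[OF u] \<open>0 < \<delta>\<close>] .
  then obtain Ls where Ls: "\<And>k. \<forall>v\<in>C. \<bar>u v k - exp_poly n (Ls k) v\<bar> < \<delta>" by metis
  obtain R where "0 \<le> R" "C \<subseteq> cube n R" using compact_subset_cube[OF C] .
  obtain H where H: "is_deep_net \<sigma> n (n + m + 2) m H"
    and close: "\<forall>v\<in>cube n R. \<forall>k<m. \<bar>H v k - exp_poly n (Ls k) v\<bar> < \<delta>"
    using deep_net_approx_exp_polys[OF \<sigma> identity_approx_if_deriv_nonzero[OF deriv]
        shallow_approx_square[OF \<sigma> nonaffine] \<open>1 \<le> m\<close> \<open>0 < \<delta>\<close> \<open>0 \<le> R\<close>] by blast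
  have "\<bar>u v k - H v k\<bar> < 2 * \<delta>" if "v \<in> C" "k < m" for v k
  proof -
    have "\<bar>u v k - exp_poly n (Ls k) v\<bar> < \<delta>" "\<bar>H v k - exp_poly n (Ls k) v\<bar> < \<delta>"
      using Ls close \<open>C \<subseteq> cube n R\<close> that by auto
    then show ?thesis by linarith
  qed
  then have "vnorm m (u v - H v) < m * (2 * \<delta>)" if "v \<in> C" for v
    using that \<open>1 \<le> m\<close> by (intro vnorm_less) auto
  moreover have "m * (2 * \<delta>) = \<epsilon>" unfolding \<delta>_def using \<open>1 \<le> m\<close> by simp
  ultimately show ?thesis using H by auto
qed

lemma continuous_on_tuple:
  assumes "\<And>i. i < n \<Longrightarrow> continuous_on K (f i)"
  shows "continuous_on K (tuple n f)"
  unfolding tuple_def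
proof (rule continuous_on_coordinatewise_then_product)
  show "continuous_on K (\<lambda>x. if i < n then f i x else 0)" for i
    using assms by (cases "i < n") auto
qed

theorem theorem3p2:
  fixes A :: "('a::topological_space \<Rightarrow> real) set"
    and n m :: nat
    and \<sigma> :: "real \<Rightarrow> real"
    and K :: "'a set"
    and f :: "nat \<Rightarrow> 'a \<Rightarrow> real"
  assumes A_cont: "\<forall>h\<in>A. continuous_on UNIV h"
    and A_prop: "fd_comp_property A n"
    and \<sigma>_cont: "continuous_on UNIV \<sigma>"
    and \<sigma>_nonaffine: "\<not> (\<exists>a c. \<forall>t. \<sigma> t = a * t + c)"
    and \<sigma>_deriv: "\<exists>t0 U. open U \<and> t0 \<in> U \<and> (\<forall>t\<in>U. \<sigma> differentiable (at t))
                     \<and> isCont (deriv \<sigma>) t0 \<and> deriv \<sigma> t0 \<noteq> 0"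
    and m_pos: "m \<ge> 1"
    and K_compact: "compact K"
    and f_in: "\<forall>i<n. f i \<in> A"
    and f_dense: "dense_comp n m K (tuple n f)"
  shows "\<forall>g. continuous_on K g \<and> g ` K \<subseteq> Rn m \<longrightarrow>
           (\<forall>\<epsilon>>0. \<exists>H\<in>NN \<sigma> (n + m + 2) m n (tuple n f).
                      (\<forall>x\<in>K. vnorm m (g x - H x) < \<epsilon>))"
proof (intro allI impI)
  fix g :: "'a \<Rightarrow> nat \<Rightarrow> real" and \<epsilon> :: real
  assume g: "continuous_on K g \<and> g ` K \<subseteq> Rn m" and "0 < \<epsilon>"
  then have "0 < \<epsilon>/2" by simp
  obtain u where u: "continuous_on (Rn n) u" and gu: "\<forall>x\<in>K. vnorm m (g x - u (tuple n f x)) < \<epsilon>/2"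
    using f_dense[unfolded dense_comp_def, rule_format, OF g \<open>0 < \<epsilon>/2\<close>] by blast
  have "continuous_on K (tuple n f)"
    using A_cont f_in by (intro continuous_on_tuple) (auto intro: continuous_on_subset)
  then have C: "compact (tuple n f ` K)" "tuple n f ` K \<subseteq> Rn n"
    using K_compact by (auto intro: compact_continuous_image simp: tuple_def Rn_def)
  obtain t0 U where deriv: "open U" "t0 \<in> U" "\<forall>t\<in>U. \<sigma> differentiable (at t)"
    "isCont (deriv \<sigma>) t0" "deriv \<sigma> t0 \<noteq> 0" using \<sigma>_deriv by blast
  obtain H where H: "is_deep_net \<sigma> n (n + m + 2) m H"
    and uH: "\<forall>v\<in>tuple n f ` K. vnorm m (u v - H v) < \<epsilon>/2"
    using deep_narrow_net_approx[OF \<sigma>_cont \<sigma>_nonaffine deriv m_pos C continuous_on_subset[OF u C(2)]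
        \<open>0 < \<epsilon>/2\<close>] by blast
  have "vnorm m (g x - H (tuple n f x)) < \<epsilon>" if "x \<in> K" for x
    using vnorm_diff_triangle[of m "g x" "H (tuple n f x)" "u (tuple n f x)"]
      gu[rule_format, OF that] uH[rule_format, OF imageI[OF that]] by linarith
  moreover have "H \<circ> tuple n f \<in> NN \<sigma> (n + m + 2) m n (tuple n f)" unfolding NN_def using H by blast
  ultimately show "\<exists>H\<in>NN \<sigma> (n + m + 2) m n (tuple n f). \<forall>x\<in>K. vnorm m (g x - H x) < \<epsilon>"
    by (intro bexI[of _ "H \<circ> tuple n f"]) auto
qed

end
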